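(* Let $K$ be a closed subset of $G$ with $P(K)=\emptyset$. Then for all $f\in\mathcal{L}(\mathcal{X}_K)$ and $h\in\mathcal{L}(\mathcal{X}_{N'(K)})$: $$\underline{E}^{\mathrm{irr}}_G\big(h(X_{N'(K)})+f(X_K)\big)=\underline{E}^{\mathrm{irr}}_{N'(K)}\big(h(X_{N'(K)})\big)+\underline{E}^{\mathrm{irr}}_K\big(f(X_K)\big).$$
   Context: Setting: $G$ is a finite set of nodes forming a DAG; node $s$ carries a variable $X_s$ with finite nonempty state space $\mathcal{X}_s$; $\mathcal{X}_S=\times_{s\in S}\mathcal{X}_s$; $\mathcal{L}(\mathcal{X}_S)$: real-valued functions on $\mathcal{X}_S$. $P(s)$: parents; $s\sqsubseteq v$: directed path (possibly trivial) from $s$ to $v$; $s\sqsubset v$: additionally $s\neq v$; $D(s)=\{v:s\sqsubset v\}$; $N(s)=G\setminus(\{s\}\cup D(s))$. For $K\subseteq G$: $P(K)=(\bigcup_{s\in K}P(s))\setminus K$, $D(K)=(\bigcup_{s\in K}D(s))\setminus K$, $N(K)=G\setminus(K\cup D(K))$, $N'(K)=N(K)\setminus P(K)$; $K$ closed if $s\sqsubseteq k\sqsubseteq t$, $s,t\in K$ implies $k\in K$. Local models: nonempty closed convex sets $\mathcal{M}_{s\mid x_{P(s)}}$ of probability mass functions on $\mathcal{X}_s$. Full conditional probability measure: $(A,B)\mapsto P(A\mid B)$ ($B\ne\emptyset$), (F1) $P(\cdot\mid B)$ a probability measure with $P(B\mid B)=1$; (F2) $P(A\cap C\mid B)=P(A\mid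 C\cap B)P(C\mid B)$ if $C\cap B\ne\emptyset$. Irrelevant natural extension $\mathcal{F}^{\mathrm{irr}}_G$: all full conditional probability measures $P$ on $\mathcal{X}_G$ with $P(X_s\mid x_{N(s)})\in\mathcal{M}_{s\mid x_{P(s)}}$ for all $s,x_{N(s)}$; $\underline{E}^{\mathrm{irr}}_G(f)=\inf\{\sum_{z_G}f(z_G)P(z_G):P\in\mathcal{F}^{\mathrm{irr}}_G\}$. Sub-network: for $K\subseteq G$ with $P(K)=\emptyset$, the credal network on the DAG restricted to $K$ with the same local credal sets; $\underline{E}^{\mathrm{irr}}_K$ is the lower expectation of its irrelevant natural extension (likewise $\underline{E}^{\mathrm{irr}}_{N'(K)}$). *)

theory Defs
  imports "HOL-Analysis.Analysis"
begin

text \<open>The state space of node s is X s; a joint state on S is an element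
of PiE S X (extensional functions).\<close>

definition edges :: "'n set \<Rightarrow> ('n \<Rightarrow> 'n set) \<Rightarrow> ('n \<times> 'n) set" where
  "edges S par = {(p, s). s \<in> S \<and> p \<in> S \<and> p \<in> par s}"

definition desc :: "'n set \<Rightarrow> ('n \<Rightarrow> 'n set) \<Rightarrow> 'n \<Rightarrow> 'n set" where
  "desc S par s = {v. (s, v) \<in> (edges S par)\<^sup>+}"

definition nondesc :: "'n set \<Rightarrow> ('n \<Rightarrow> 'n set) \<Rightarrow> 'n \<Rightarrow> 'n set" where
  "nondesc S par s = S - ({s} \<union> desc S par s)"

definition parents_set :: "('n \<Rightarrow> 'n set) \<Rightarrow> 'n set \<Rightarrow> 'n set" where
  "parents_set par K = (\<Union>s\<in>K. par s) - K"

definition desc_set :: "'n set \<Rightarrow> ('n \<Rightarrow> 'n set) \<Rightarrow> 'n set \<Rightarrow> 'n set" where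
  "desc_set G par K = (\<Union>s\<in>K. desc G par s) - K"

definition nondesc_set :: "'n set \<Rightarrow> ('n \<Rightarrow> 'n set) \<Rightarrow> 'n set \<Rightarrow> 'n set" where
  "nondesc_set G par K = G - (K \<union> desc_set G par K)"

definition nondesc'_set :: "'n set \<Rightarrow> ('n \<Rightarrow> 'n set) \<Rightarrow> 'n set \<Rightarrow> 'n set" where
  "nondesc'_set G par K = nondesc_set G par K - parents_set par K"

definition closed_set :: "'n set \<Rightarrow> ('n \<Rightarrow> 'n set) \<Rightarrow> 'n set \<Rightarrow> bool" where
  "closed_set G par K \<longleftrightarrow> (\<forall>s t k. s \<in> K \<and> t \<in> K \<and> (s, k) \<in> (edges G par)\<^sup>* \<and>
      (k, t) \<in> (edges G par)\<^sup>* \<longrightarrow> k \<in> K)"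

definition is_pmf_on :: "'v set \<Rightarrow> ('v \<Rightarrow> real) \<Rightarrow> bool" where
  "is_pmf_on A p \<longleftrightarrow> (\<forall>y. 0 \<le> p y) \<and> (\<forall>y. y \<notin> A \<longrightarrow> p y = 0) \<and> (\<Sum>y\<in>A. p y) = 1"

text \<open>Since all relevant functions vanish outside the finite set X s, pointwise sequential
closedness is the usual closedness in the finite-dimensional space.\<close>
definition pw_convex :: "('v \<Rightarrow> real) set \<Rightarrow> bool" where
  "pw_convex C \<longleftrightarrow> (\<forall>p\<in>C. \<forall>q\<in>C. \<forall>t::real. 0 \<le> t \<and> t \<le> 1 \<longrightarrow>
      (\<lambda>y. t * p y + (1 - t) * q y) \<in> C)"

definition pw_closed :: "('v \<Rightarrow> real) set \<Rightarrow> bool" where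
  "pw_closed C \<longleftrightarrow> (\<forall>(p :: nat \<Rightarrow> 'v \<Rightarrow> real) q. (\<forall>n. p n \<in> C) \<and>
      (\<forall>y. (\<lambda>n. p n y) \<longlonglongrightarrow> q y) \<longrightarrow> q \<in> C)"

definition credal_network ::
  "'n set \<Rightarrow> ('n \<Rightarrow> 'n set) \<Rightarrow> ('n \<Rightarrow> 'v set) \<Rightarrow> ('n \<Rightarrow> ('n \<Rightarrow> 'v) \<Rightarrow> ('v \<Rightarrow> real) set) \<Rightarrow> bool"
where
  "credal_network G par X M \<longleftrightarrow>
     finite G \<and> (\<forall>s\<in>G. par s \<subseteq> G) \<and> acyclic (edges G par) \<and>
     (\<forall>s\<in>G. finite (X s) \<and> X s \<noteq> {}) \<and>
     (\<forall>s\<in>G. \<forall>x\<in>PiE (par s) X.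
        M s x \<noteq> {} \<and> pw_convex (M s x) \<and> pw_closed (M s x) \<and> (\<forall>p\<in>M s x. is_pmf_on (X s) p))"

definition full_cond_prob :: "'a set \<Rightarrow> ('a set \<Rightarrow> 'a set \<Rightarrow> real) \<Rightarrow> bool" where
  "full_cond_prob \<Omega> P \<longleftrightarrow>
     (\<forall>B\<subseteq>\<Omega>. B \<noteq> {} \<longrightarrow>
        (\<forall>A\<subseteq>\<Omega>. 0 \<le> P A B) \<and> P \<Omega> B = 1 \<and>
        (\<forall>A1\<subseteq>\<Omega>. \<forall>A2\<subseteq>\<Omega>. A1 \<inter> A2 = {} \<longrightarrow> P (A1 \<union> A2) B = P A1 B + P A2 B) \<and>
        P B B = 1) \<and>
     (\<forall>A\<subseteq>\<Omega>. \<forall>B\<subseteq>\<Omega>. \<forall>C\<subseteq>\<Omega>. B \<noteq> {} \<longrightarrow> C \<inter> B \<noteq> {} \<longrightarrow>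
        P (A \<inter> C) B = P A (C \<inter> B) * P C B)"

definition irr_ext ::
  "'n set \<Rightarrow> ('n \<Rightarrow> 'n set) \<Rightarrow> ('n \<Rightarrow> 'v set) \<Rightarrow> ('n \<Rightarrow> ('n \<Rightarrow> 'v) \<Rightarrow> ('v \<Rightarrow> real) set)
   \<Rightarrow> (('n \<Rightarrow> 'v) set \<Rightarrow> ('n \<Rightarrow> 'v) set \<Rightarrow> real) set"
where
  "irr_ext S par X M = {P. full_cond_prob (PiE S X) P \<and>
     (\<forall>s\<in>S. \<forall>x\<in>PiE (nondesc S par s) X.
        (\<lambda>y. P {z\<in>PiE S X. z s = y} {z\<in>PiE S X. restrict z (nondesc S par s) = x})
          \<in> M s (restrict x (par s)))}"

definition lower_E_irr ::
  "'n set \<Rightarrow> ('n \<Rightarrow> 'n set) \<Rightarrow> ('n \<Rightarrow> 'v set) \<Rightarrow> ('n \<Rightarrow> ('n \<Rightarrow> 'v) \<Rightarrow> ('v \<Rightarrow> real) set)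
   \<Rightarrow> (('n \<Rightarrow> 'v) \<Rightarrow> real) \<Rightarrow> real"
where
  "lower_E_irr S par X M f =
     Inf ((\<lambda>P. \<Sum>z\<in>PiE S X. f z * P {z} (PiE S X)) ` irr_ext S par X M)"

end

theory Submission
  imports Defs
begin

text \<open>Lower bound: the marginals of any P in the irrelevant natural extension on the ancestral
sets K and N'(K) lie in the irrelevant natural extensions of the sub-networks (conditioning on
the non-descendants inside an ancestral set mixes conditionals on all non-descendants, and the
local credal sets are convex), and the expectation of h + f splits along them.
Upper bound: any pair of full conditional probabilities Q1, Q2 of the two sub-networks is
realised jointly. Approximate Q1 and Q2 by strictly positive weights, multiply them with strictly
positive perturbations of local models at the remaining nodes, and pass to a convergent
subsequence of the resulting conditional probabilities; the limit lies in the irrelevant natural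
extension of G, and its expectations of functions of X_K or of X_N'(K) are those under Q1, Q2.\<close>

context
  fixes \<Omega> :: "'a set" and P :: "'a set \<Rightarrow> 'a set \<Rightarrow> real"
  assumes fcp: "full_cond_prob \<Omega> P"
begin

lemma full_cond_prob_nonneg: "B \<subseteq> \<Omega> \<Longrightarrow> B \<noteq> {} \<Longrightarrow> A \<subseteq> \<Omega> \<Longrightarrow> 0 \<le> P A B"
  using fcp unfolding full_cond_prob_def by simp

lemma full_cond_prob_total: "B \<subseteq> \<Omega> \<Longrightarrow> B \<noteq> {} \<Longrightarrow> P \<Omega> B = 1"
  using fcp unfolding full_cond_prob_def by simp

lemma full_cond_prob_self: "B \<subseteq> \<Omega> \<Longrightarrow> B \<noteq> {} \<Longrightarrow> P B B = 1"
  using fcp unfolding full_cond_prob_def by simp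

lemma full_cond_prob_Un:
  "B \<subseteq> \<Omega> \<Longrightarrow> B \<noteq> {} \<Longrightarrow> A1 \<subseteq> \<Omega> \<Longrightarrow> A2 \<subseteq> \<Omega> \<Longrightarrow> A1 \<inter> A2 = {} \<Longrightarrow>
    P (A1 \<union> A2) B = P A1 B + P A2 B"
  using fcp unfolding full_cond_prob_def by simp

lemma full_cond_prob_mult:
  "A \<subseteq> \<Omega> \<Longrightarrow> B \<subseteq> \<Omega> \<Longrightarrow> C \<subseteq> \<Omega> \<Longrightarrow> B \<noteq> {} \<Longrightarrow> C \<inter> B \<noteq> {} \<Longrightarrow>
    P (A \<inter> C) B = P A (C \<inter> B) * P C B"
  using fcp unfolding full_cond_prob_def by simp

lemma full_cond_prob_empty: "B \<subseteq> \<Omega> \<Longrightarrow> B \<noteq> {} \<Longrightarrow> P {} B = 0"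
  using full_cond_prob_Un[of B "{}" "{}"] by simp

lemma full_cond_prob_mono:
  assumes "B \<subseteq> \<Omega>" "B \<noteq> {}" "A1 \<subseteq> A2" "A2 \<subseteq> \<Omega>"
  shows "P A1 B \<le> P A2 B"
proof -
  have "P A2 B = P A1 B + P (A2 - A1) B"
    using full_cond_prob_Un[of B A1 "A2 - A1"] assms by (auto simp: Un_absorb1)
  with full_cond_prob_nonneg[of B "A2 - A1"] assms show ?thesis by auto
qed

lemma full_cond_prob_le_1: "B \<subseteq> \<Omega> \<Longrightarrow> B \<noteq> {} \<Longrightarrow> A \<subseteq> \<Omega> \<Longrightarrow> P A B \<le> 1"
  using full_cond_prob_mono[of B A \<Omega>] full_cond_prob_total[of B] by simp

lemma full_cond_prob_UN_disjoint:
  assumes B: "B \<subseteq> \<Omega>" "B \<noteq> {}" and "finite I" "\<And>i. i \<in> I \<Longrightarrow> A i \<subseteq> \<Omega>"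
    and "\<And>i j. i \<in> I \<Longrightarrow> j \<in> I \<Longrightarrow> i \<noteq> j \<Longrightarrow> A i \<inter> A j = {}"
  shows "P (\<Union>i\<in>I. A i) B = (\<Sum>i\<in>I. P (A i) B)"
  using assms(3-5)
proof (induction I rule: finite_induct)
  case empty
  then show ?case using full_cond_prob_empty[OF B] by simp
next
  case (insert a I)
  have "P (A a \<union> (\<Union>i\<in>I. A i)) B = P (A a) B + P (\<Union>i\<in>I. A i) B"
    using insert.prems insert.hyps B by (intro full_cond_prob_Un) fastforce+
  then show ?case using insert by simp
qed

lemma full_cond_prob_sum_singletons:
  "B \<subseteq> \<Omega> \<Longrightarrow> B \<noteq> {} \<Longrightarrow> finite A \<Longrightarrow> A \<subseteq> \<Omega> \<Longrightarrow> P A B = (\<Sum>z\<in>A. P {z} B)"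
  using full_cond_prob_UN_disjoint[of B A "\<lambda>z. {z}"] by auto

lemma full_cond_prob_total_probability:
  assumes fin: "finite E" and A: "A \<subseteq> \<Omega>" and B: "B \<subseteq> \<Omega>" "B \<noteq> {}"
    and part: "B = (\<Union>e\<in>E. C e)" and ne: "\<And>e. e \<in> E \<Longrightarrow> C e \<noteq> {}"
    and disj: "\<And>e e'. e \<in> E \<Longrightarrow> e' \<in> E \<Longrightarrow> e \<noteq> e' \<Longrightarrow> C e \<inter> C e' = {}"
  shows "P A B = (\<Sum>e\<in>E. P (C e) B * P A (C e))" and "(\<Sum>e\<in>E. P (C e) B) = 1"
proof -
  have C: "C e \<subseteq> B" if "e \<in> E" for e
    using part that by blast
  have "P A B = P (A \<inter> B) B"
    using full_cond_prob_mult[OF A B(1) B(1) B(2)] full_cond_prob_self[OF B] B(2) by simp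
  also have "A \<inter> B = (\<Union>e\<in>E. A \<inter> C e)"
    using part by blast
  also have "P (\<Union>e\<in>E. A \<inter> C e) B = (\<Sum>e\<in>E. P (A \<inter> C e) B)"
  proof (rule full_cond_prob_UN_disjoint[OF B fin])
    show "A \<inter> C e \<subseteq> \<Omega>" for e using A by blast
    show "(A \<inter> C e) \<inter> (A \<inter> C e') = {}" if "e \<in> E" "e' \<in> E" "e \<noteq> e'" for e e'
      using disj[OF that] by blast
  qed
  also have "\<dots> = (\<Sum>e\<in>E. P (C e) B * P A (C e))"
  proof (rule sum.cong[OF refl])
    fix e assume e: "e \<in> E"
    have "C e \<subseteq> \<Omega>" "C e \<inter> B = C e" using C[OF e] B by blast+
    then show "P (A \<inter> C e) B = P (C e) B * P A (C e)"
      using full_cond_prob_mult[OF A B(1) \<open>C e \<subseteq> \<Omega>\<close> B(2)] ne[OF e] by (simp add: mult.commute)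
  qed
  finally show "P A B = (\<Sum>e\<in>E. P (C e) B * P A (C e))" .
  have "(\<Sum>e\<in>E. P (C e) B) = P (\<Union>e\<in>E. C e) B"
    using C B disj by (intro full_cond_prob_UN_disjoint[OF B fin, symmetric]) blast+
  then show "(\<Sum>e\<in>E. P (C e) B) = 1"
    using full_cond_prob_self[OF B] part by simp
qed

end

definition weighted_cond :: "('a \<Rightarrow> real) \<Rightarrow> 'a set \<Rightarrow> 'a set \<Rightarrow> real" where
  "weighted_cond w A B = sum w (A \<inter> B) / sum w B"

lemma full_cond_prob_weighted_cond:
  fixes w :: "'a \<Rightarrow> real"
  assumes fin: "finite \<Omega>" and pos: "\<And>z. z \<in> \<Omega> \<Longrightarrow> 0 < w z"
  shows "full_cond_prob \<Omega> (weighted_cond w)"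
proof -
  have sum_pos: "0 < sum w B" if "B \<subseteq> \<Omega>" "B \<noteq> {}" for B
    using that fin pos by (intro sum_pos) (auto intro: finite_subset)
  show ?thesis
    unfolding full_cond_prob_def
  proof (intro conjI allI impI)
    fix B A assume "B \<subseteq> \<Omega>"
    then have "0 \<le> w z" if "z \<in> B" for z
      using pos that by (simp add: less_imp_le subset_iff)
    then show "0 \<le> weighted_cond w A B"
      unfolding weighted_cond_def by (intro divide_nonneg_nonneg sum_nonneg) auto
  next
    fix B assume B: "B \<subseteq> \<Omega>" "B \<noteq> {}"
    then show "weighted_cond w \<Omega> B = 1" "weighted_cond w B B = 1"
      unfolding weighted_cond_def using sum_pos[OF B] by (simp_all add: Int_absorb1)
  next
    fix B A1 A2 assume B: "B \<subseteq> \<Omega>" "B \<noteq> {}" and A: "A1 \<subseteq> \<Omega>" "A2 \<subseteq> \<Omega>" "A1 \<inter> A2 = {}"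
    have "sum w ((A1 \<union> A2) \<inter> B) = sum w (A1 \<inter> B) + sum w (A2 \<inter> B)"
      using fin B A by (subst Int_Un_distrib2, intro sum.union_disjoint) (auto intro: finite_subset)
    then show "weighted_cond w (A1 \<union> A2) B = weighted_cond w A1 B + weighted_cond w A2 B"
      unfolding weighted_cond_def by (simp add: add_divide_distrib)
  next
    fix A B C assume "B \<subseteq> \<Omega>" "C \<subseteq> \<Omega>" "C \<inter> B \<noteq> {}"
    then have "0 < sum w (C \<inter> B)" by (intro sum_pos) auto
    moreover have "A \<inter> C \<inter> B = A \<inter> (C \<inter> B)" by blast
    ultimately show "weighted_cond w (A \<inter> C) B = weighted_cond w A (C \<inter> B) * weighted_cond w C B"
      unfolding weighted_cond_def by simp
  qed
qed

lemma full_cond_prob_limit: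
  assumes fcp: "\<And>n. full_cond_prob \<Omega> (P n)"
    and lim: "\<And>A B. A \<subseteq> \<Omega> \<Longrightarrow> B \<subseteq> \<Omega> \<Longrightarrow> B \<noteq> {} \<Longrightarrow> (\<lambda>n. P n A B) \<longlonglongrightarrow> Q A B"
  shows "full_cond_prob \<Omega> Q"
  unfolding full_cond_prob_def
proof (intro conjI allI impI)
  fix B A assume "B \<subseteq> \<Omega>" "B \<noteq> {}" "A \<subseteq> \<Omega>"
  then show "0 \<le> Q A B"
    using lim[of A B] full_cond_prob_nonneg[OF fcp, of B A] by (intro LIMSEQ_le_const) auto
next
  fix B assume B: "B \<subseteq> \<Omega>" "B \<noteq> {}"
  have "(\<lambda>n. 1) \<longlonglongrightarrow> Q \<Omega> B" "(\<lambda>n. 1) \<longlonglongrightarrow> Q B B"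
    using lim[of \<Omega> B] lim[of B B] B full_cond_prob_total[OF fcp B] full_cond_prob_self[OF fcp B]
    by simp_all
  then show "Q \<Omega> B = 1" "Q B B = 1"
    by (simp_all add: LIMSEQ_const_iff)
next
  fix B A1 A2 assume B: "B \<subseteq> \<Omega>" "B \<noteq> {}" and A: "A1 \<subseteq> \<Omega>" "A2 \<subseteq> \<Omega>" "A1 \<inter> A2 = {}"
  have "(\<lambda>n. P n (A1 \<union> A2) B) = (\<lambda>n. P n A1 B + P n A2 B)"
    using full_cond_prob_Un[OF fcp B A] by simp
  moreover have "(\<lambda>n. P n A1 B + P n A2 B) \<longlonglongrightarrow> Q A1 B + Q A2 B"
    using A B by (intro tendsto_add lim)
  moreover have "(\<lambda>n. P n (A1 \<union> A2) B) \<longlonglongrightarrow> Q (A1 \<union> A2) B"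
    using A B by (intro lim) auto
  ultimately show "Q (A1 \<union> A2) B = Q A1 B + Q A2 B"
    using LIMSEQ_unique by metis
next
  fix A B C assume h: "A \<subseteq> \<Omega>" "B \<subseteq> \<Omega>" "C \<subseteq> \<Omega>" "B \<noteq> {}" "C \<inter> B \<noteq> {}"
  have "(\<lambda>n. P n (A \<inter> C) B) = (\<lambda>n. P n A (C \<inter> B) * P n C B)"
    using full_cond_prob_mult[OF fcp h] by simp
  moreover have "(\<lambda>n. P n A (C \<inter> B) * P n C B) \<longlonglongrightarrow> Q A (C \<inter> B) * Q C B"
    using h by (intro tendsto_mult lim) auto
  moreover have "(\<lambda>n. P n (A \<inter> C) B) \<longlonglongrightarrow> Q (A \<inter> C) B"
    using h by (intro lim) auto
  ultimately show "Q (A \<inter> C) B = Q A (C \<inter> B) * Q C B"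
    using LIMSEQ_unique by metis
qed

lemma bounded_family_convergent_subseq:
  fixes f :: "nat \<Rightarrow> 'i \<Rightarrow> real"
  assumes "finite I" "\<And>n i. i \<in> I \<Longrightarrow> \<bar>f n i\<bar> \<le> c"
  shows "\<exists>r. strict_mono r \<and> (\<forall>i\<in>I. convergent (\<lambda>n. f (r n) i))"
  using assms
proof (induction I rule: finite_induct)
  case empty
  then show ?case by (intro exI[of _ id]) (auto simp: strict_mono_def)
next
  case (insert a I)
  then obtain r where r: "strict_mono r" "\<forall>i\<in>I. convergent (\<lambda>n. f (r n) i)" by auto
  obtain r' where r': "strict_mono r'" "monoseq (\<lambda>n. f (r (r' n)) a)"
    using seq_monosub[of "\<lambda>n. f (r n) a"] by (auto simp: o_def)
  have "Bseq (\<lambda>n. f (r (r' n)) a)"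
    using insert.prems by (intro BseqI'[of _ c]) auto
  then have "convergent (\<lambda>n. f (r (r' n)) a)"
    using Bseq_monoseq_convergent r'(2) by blast
  moreover have "convergent (\<lambda>n. f (r (r' n)) i)" if "i \<in> I" for i
  proof -
    have "convergent (\<lambda>n. f (r n) i)"
      using r(2) that by blast
    then obtain L where "(\<lambda>n. f (r n) i) \<longlonglongrightarrow> L"
      unfolding convergent_def by blast
    then have "(\<lambda>n. f (r (r' n)) i) \<longlonglongrightarrow> L"
      using LIMSEQ_subseq_LIMSEQ[OF _ r'(1)] by (auto simp: o_def)
    then show ?thesis by (auto simp: convergent_def)
  qed
  moreover have "strict_mono (\<lambda>n. r (r' n))"
    using strict_mono_o[OF r(1) r'(1)] by (simp add: o_def)
  ultimately show ?case
    by (intro exI[of _ "\<lambda>n. r (r' n)"]) blast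
qed

lemma full_cond_prob_convergent_subseq:
  fixes P :: "nat \<Rightarrow> 'a set \<Rightarrow> 'a set \<Rightarrow> real"
  assumes fin: "finite \<Omega>" and fcp: "\<And>n. full_cond_prob \<Omega> (P n)"
  obtains r Q where "strict_mono r" "full_cond_prob \<Omega> Q"
    "\<And>A B. A \<subseteq> \<Omega> \<Longrightarrow> B \<subseteq> \<Omega> \<Longrightarrow> B \<noteq> {} \<Longrightarrow> (\<lambda>k. P (r k) A B) \<longlonglongrightarrow> Q A B"
proof -
  let ?I = "{(A, B). A \<subseteq> \<Omega> \<and> B \<subseteq> \<Omega> \<and> B \<noteq> {}}"
  have "?I \<subseteq> Pow \<Omega> \<times> Pow \<Omega>" by auto
  then have "finite ?I" using fin by (simp add: finite_subset)
  moreover have "\<bar>P n (fst i) (snd i)\<bar> \<le> 1" if "i \<in> ?I" for n i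
    using that full_cond_prob_nonneg[OF fcp, of "snd i" "fst i" n]
      full_cond_prob_le_1[OF fcp, of "snd i" "fst i" n] by (cases i) (simp add: abs_le_iff)
  ultimately obtain r where r: "strict_mono r"
    "\<forall>i\<in>?I. convergent (\<lambda>k. P (r k) (fst i) (snd i))"
    using bounded_family_convergent_subseq[of ?I "\<lambda>n i. P n (fst i) (snd i)" 1] by auto
  define Q where "Q A B = lim (\<lambda>k. P (r k) A B)" for A B
  have lim: "(\<lambda>k. P (r k) A B) \<longlonglongrightarrow> Q A B" if "A \<subseteq> \<Omega>" "B \<subseteq> \<Omega>" "B \<noteq> {}" for A B
  proof -
    have "convergent (\<lambda>k. P (r k) A B)"
      using r(2)[rule_format, of "(A, B)"] that by simp
    then show ?thesis unfolding Q_def by (simp add: convergent_LIMSEQ_iff)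
  qed
  have "full_cond_prob \<Omega> Q"
    using fcp lim by (rule full_cond_prob_limit)
  then show ?thesis using that[OF r(1)] lim by simp
qed

lemma lowest_order_ratio_tendsto:
  fixes a b :: "'i \<Rightarrow> real" and k :: "'i \<Rightarrow> nat" and e :: "nat \<Rightarrow> real"
  assumes fin: "finite F"
    and low: "\<And>B. B \<in> F \<Longrightarrow> k B < m \<Longrightarrow> a B = 0 \<and> b B = 0"
    and lead: "\<And>B. B \<in> F \<Longrightarrow> k B = m \<Longrightarrow> a B = c * b B"
    and pos: "0 < (\<Sum>B\<in>{B\<in>F. k B = m}. b B)"
    and e: "\<And>n. 0 < e n" "e \<longlonglongrightarrow> 0"
  shows "(\<lambda>n. (\<Sum>B\<in>F. e n ^ k B * a B) / (\<Sum>B\<in>F. e n ^ k B * b B)) \<longlonglongrightarrow> c"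
proof -
  define F0 where "F0 = {B\<in>F. k B = m}"
  define F1 where "F1 = {B\<in>F. m < k B}"
  define higher where "higher g x = (\<Sum>B\<in>F1. x ^ (k B - m) * g B)" for g and x :: real
  have split: "(\<Sum>B\<in>F. x ^ k B * g B) = x ^ m * (sum g F0 + higher g x)"
    if "\<And>B. B \<in> F \<Longrightarrow> k B < m \<Longrightarrow> g B = 0" for x :: real and g
  proof -
    have "(\<Sum>B\<in>F. x ^ k B * g B) = (\<Sum>B\<in>F0 \<union> F1. x ^ k B * g B)"
      using fin that by (intro sum.mono_neutral_right) (auto simp: F0_def F1_def)
    also have "\<dots> = (\<Sum>B\<in>F0. x ^ k B * g B) + (\<Sum>B\<in>F1. x ^ k B * g B)"
      using fin by (intro sum.union_disjoint) (auto simp: F0_def F1_def)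
    also have "(\<Sum>B\<in>F1. x ^ k B * g B) = x ^ m * higher g x"
      unfolding higher_def sum_distrib_left
      by (intro sum.cong) (auto simp: F1_def power_add[symmetric])
    finally show ?thesis
      by (simp add: F0_def sum_distrib_left distrib_left)
  qed
  define d where "d = sum b F0"
  have "sum a F0 = c * d"
    unfolding d_def sum_distrib_left using lead by (intro sum.cong) (auto simp: F0_def)
  then have ratio: "(\<Sum>B\<in>F. e n ^ k B * a B) / (\<Sum>B\<in>F. e n ^ k B * b B)
      = (c * d + higher a (e n)) / (d + higher b (e n))" for n
    using split[of a "e n"] split[of b "e n"] low e(1)[of n] by (simp add: d_def)
  have higher_tendsto: "(\<lambda>n. higher g (e n)) \<longlonglongrightarrow> 0" for g
  proof -
    have "(\<lambda>n. higher g (e n)) \<longlonglongrightarrow> (\<Sum>B\<in>F1. 0 ^ (k B - m) * g B)"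
      unfolding higher_def by (intro tendsto_intros e(2))
    also have "(\<Sum>B\<in>F1. (0::real) ^ (k B - m) * g B) = 0"
      by (rule sum.neutral) (auto simp: F1_def)
    finally show ?thesis .
  qed
  have "(\<lambda>n. (c * d + higher a (e n)) / (d + higher b (e n))) \<longlonglongrightarrow> (c * d + 0) / (d + 0)"
    using pos unfolding d_def F0_def by (intro tendsto_intros higher_tendsto) auto
  then show ?thesis
    using pos unfolding ratio d_def F0_def by simp
qed

text \<open>Every full conditional probability on a finite set is a limit of conditional probabilities
of strictly positive weights: the weight of u collects the masses Q {u} B of all conditioning
events B \<ni> u, damped by e ^ |\<Omega> - B|, so that as e \<rightarrow> 0 the largest events carrying mass dominate.\<close>

definition layered_weights :: "'a set \<Rightarrow> ('a set \<Rightarrow> 'a set \<Rightarrow> real) \<Rightarrow> real \<Rightarrow> 'a \<Rightarrow> real" where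
  "layered_weights \<Omega> Q e u =
     (\<Sum>B\<in>{B. B \<subseteq> \<Omega> \<and> B \<noteq> {}}. if u \<in> B then e ^ card (\<Omega> - B) * Q {u} B else 0)"

lemma layered_weights_pos:
  assumes fcp: "full_cond_prob \<Omega> Q" and fin: "finite \<Omega>" and e: "0 < e" and u: "u \<in> \<Omega>"
  shows "0 < layered_weights \<Omega> Q e u"
  unfolding layered_weights_def
proof (rule sum_pos2)
  show "finite {B. B \<subseteq> \<Omega> \<and> B \<noteq> {}}" using fin by simp
  show "{u} \<in> {B. B \<subseteq> \<Omega> \<and> B \<noteq> {}}" using u by simp
  show "0 < (if u \<in> {u} then e ^ card (\<Omega> - {u}) * Q {u} {u} else 0)"
    using full_cond_prob_self[OF fcp, of "{u}"] u e by simp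
  show "0 \<le> (if u \<in> B then e ^ card (\<Omega> - B) * Q {u} B else 0)"
    if "B \<in> {B. B \<subseteq> \<Omega> \<and> B \<noteq> {}}" for B
    using that full_cond_prob_nonneg[OF fcp, of B "{u}"] e by auto
qed

lemma sum_layered_weights:
  assumes fcp: "full_cond_prob \<Omega> Q" and fin: "finite \<Omega>" and C: "C \<subseteq> \<Omega>"
  shows "sum (layered_weights \<Omega> Q e) C = (\<Sum>B\<in>{B. B \<subseteq> \<Omega> \<and> B \<noteq> {}}. e ^ card (\<Omega> - B) * Q (C \<inter> B) B)"
proof -
  have fC: "finite C" using C fin finite_subset by auto
  have "sum (layered_weights \<Omega> Q e) C
      = (\<Sum>B\<in>{B. B \<subseteq> \<Omega> \<and> B \<noteq> {}}. \<Sum>u\<in>C. if u \<in> B then e ^ card (\<Omega> - B) * Q {u} B else 0)"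
    unfolding layered_weights_def by (rule sum.swap)
  also have "\<dots> = (\<Sum>B\<in>{B. B \<subseteq> \<Omega> \<and> B \<noteq> {}}. e ^ card (\<Omega> - B) * Q (C \<inter> B) B)"
  proof (rule sum.cong[OF refl])
    fix B assume B: "B \<in> {B. B \<subseteq> \<Omega> \<and> B \<noteq> {}}"
    have "(\<Sum>u\<in>C. if u \<in> B then e ^ card (\<Omega> - B) * Q {u} B else 0)
        = (\<Sum>u\<in>C \<inter> B. e ^ card (\<Omega> - B) * Q {u} B)"
      using fC by (simp add: sum.inter_restrict)
    also have "\<dots> = e ^ card (\<Omega> - B) * (\<Sum>u\<in>C \<inter> B. Q {u} B)"
      by (simp add: sum_distrib_left)
    also have "(\<Sum>u\<in>C \<inter> B. Q {u} B) = Q (C \<inter> B) B"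
      using B C fC by (intro full_cond_prob_sum_singletons[OF fcp, symmetric]) auto
    finally show "(\<Sum>u\<in>C. if u \<in> B then e ^ card (\<Omega> - B) * Q {u} B else 0)
        = e ^ card (\<Omega> - B) * Q (C \<inter> B) B" .
  qed
  finally show ?thesis .
qed

text \<open>A largest conditioning event B in which C has positive probability contains C:
otherwise B \<union> C would be a larger one.\<close>

lemma full_cond_prob_maximal_event_contains:
  assumes fcp: "full_cond_prob \<Omega> Q" and fin: "finite \<Omega>" and C: "C \<subseteq> \<Omega>"
    and B: "B \<subseteq> \<Omega>" "B \<noteq> {}" and pos: "0 < Q (C \<inter> B) B"
    and max: "\<And>B'. B' \<subseteq> \<Omega> \<Longrightarrow> B' \<noteq> {} \<Longrightarrow> 0 < Q (C \<inter> B') B' \<Longrightarrow> card (\<Omega> - B) \<le> card (\<Omega> - B')"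
  shows "C \<subseteq> B"
proof -
  define B' where "B' = B \<union> C"
  have B': "B' \<subseteq> \<Omega>" "B' \<noteq> {}" using B C unfolding B'_def by auto
  have "Q (C \<inter> B) B = Q C B"
    using full_cond_prob_mult[OF fcp C B(1) B(1) B(2)] full_cond_prob_self[OF fcp B] B(2) by simp
  with pos have QCB: "0 < Q C B" by simp
  have "0 < Q C B'"
  proof (rule ccontr)
    assume "\<not> 0 < Q C B'"
    then have z: "Q C B' = 0" using full_cond_prob_nonneg[OF fcp B' C] by simp
    have "Q (C \<inter> B) B' = Q C B * Q B B'"
      using full_cond_prob_mult[OF fcp C B'(1) B(1) B'(2)] B(2) unfolding B'_def by (simp add: Int_absorb2)
    moreover have "0 \<le> Q (C \<inter> B) B'" "Q (C \<inter> B) B' \<le> Q C B'"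
      using full_cond_prob_nonneg[OF fcp B', of "C \<inter> B"] full_cond_prob_mono[OF fcp B' _ C] C
      by auto
    ultimately have QB: "Q B B' = 0" using z QCB by simp
    have "Q B' B' = Q B B' + Q (C - B) B'"
      using full_cond_prob_Un[OF fcp B', of B "C - B"] B C by (auto simp: B'_def)
    moreover have "Q (C - B) B' \<le> Q C B'" using full_cond_prob_mono[OF fcp B' _ C] by auto
    ultimately show False using QB z full_cond_prob_self[OF fcp B'] by simp
  qed
  then have "card (\<Omega> - B) \<le> card (\<Omega> - B')"
    using max[OF B'] by (simp add: B'_def Int_absorb2)
  moreover have "\<Omega> - B' \<subseteq> \<Omega> - B" unfolding B'_def by auto
  ultimately have "\<Omega> - B' = \<Omega> - B" using fin by (meson card_seteq finite_Diff)
  then show ?thesis using B B' unfolding B'_def by blast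
qed

lemma weighted_cond_layered_weights_tendsto:
  assumes fcp: "full_cond_prob \<Omega> Q" and fin: "finite \<Omega>"
    and A: "A \<subseteq> \<Omega>" and C: "C \<subseteq> \<Omega>" "C \<noteq> {}"
    and e: "\<And>n. 0 < e n" "e \<longlonglongrightarrow> 0"
  shows "(\<lambda>n. weighted_cond (layered_weights \<Omega> Q (e n)) A C) \<longlonglongrightarrow> Q A C"
proof -
  let ?F = "{B. B \<subseteq> \<Omega> \<and> B \<noteq> {}}"
  define k where "k B = card (\<Omega> - B)" for B
  define a where "a B = Q (A \<inter> C \<inter> B) B" for B
  define b where "b B = Q (C \<inter> B) B" for B
  define G where "G = {B \<in> ?F. 0 < b B}"
  have "C \<in> G" unfolding G_def b_def using C full_cond_prob_self[OF fcp C] by (simp add: Int_absorb2)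
  moreover have "finite G"
    using fin by (auto simp: G_def intro: finite_subset[of _ "Pow \<Omega>"])
  ultimately have "Min (k ` G) \<in> k ` G" by (intro Min_in) auto
  then obtain B0 where B0: "B0 \<in> G" "k B0 = Min (k ` G)" by (metis imageE)
  define m where "m = Min (k ` G)"
  have min: "m \<le> k B" if "B \<in> G" for B
    unfolding m_def using \<open>finite G\<close> that by simp
  have ab: "0 \<le> a B" "a B \<le> b B" "0 \<le> b B" if "B \<subseteq> \<Omega>" "B \<noteq> {}" for B
  proof -
    show "0 \<le> a B"
      unfolding a_def by (rule full_cond_prob_nonneg[OF fcp that]) (use A in auto)
    show "a B \<le> b B"
      unfolding a_def b_def by (rule full_cond_prob_mono[OF fcp that]) (use C in auto)
    then show "0 \<le> b B" using \<open>0 \<le> a B\<close> by simp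
  qed
  have low: "a B = 0 \<and> b B = 0" if "B \<in> ?F" "k B < m" for B
  proof -
    have "B \<notin> G" using min[of B] that(2) by linarith
    then have "b B = 0" using ab[of B] that(1) unfolding G_def by auto
    then show ?thesis using ab[of B] that(1) by auto
  qed
  have lead: "a B = Q A C * b B" if B: "B \<subseteq> \<Omega>" "B \<noteq> {}" "k B = m" for B
  proof (cases "0 < b B")
    case True
    have "C \<subseteq> B"
    proof (rule full_cond_prob_maximal_event_contains[OF fcp fin C(1) B(1,2)])
      show "0 < Q (C \<inter> B) B" using True unfolding b_def .
      show "card (\<Omega> - B) \<le> card (\<Omega> - B')"
        if "B' \<subseteq> \<Omega>" "B' \<noteq> {}" "0 < Q (C \<inter> B') B'" for B'
        using min[of B'] that B(3) unfolding G_def b_def k_def by auto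
    qed
    then have "A \<inter> C \<inter> B = A \<inter> C" "C \<inter> B = C" by auto
    then show ?thesis
      using full_cond_prob_mult[OF fcp A B(1) C(1) B(2)] C(2) unfolding a_def b_def by simp
  next
    case False
    then show ?thesis using ab[OF B(1,2)] by simp
  qed
  have "0 < (\<Sum>B\<in>{B\<in>?F. k B = m}. b B)"
  proof (rule sum_pos2)
    show "finite {B\<in>?F. k B = m}" using fin by simp
    show "B0 \<in> {B\<in>?F. k B = m}" "0 < b B0" using B0 unfolding G_def m_def by auto
    show "0 \<le> b B" if "B \<in> {B\<in>?F. k B = m}" for B
      using ab[of B] that by auto
  qed
  then have "(\<lambda>n. (\<Sum>B\<in>?F. e n ^ k B * a B) / (\<Sum>B\<in>?F. e n ^ k B * b B)) \<longlonglongrightarrow> Q A C"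
    using lowest_order_ratio_tendsto[of ?F k m a b "Q A C" e] fin low lead e by auto
  moreover have "weighted_cond (layered_weights \<Omega> Q (e n)) A C
      = (\<Sum>B\<in>?F. e n ^ k B * a B) / (\<Sum>B\<in>?F. e n ^ k B * b B)" for n
  proof -
    have "A \<inter> C \<inter> C = A \<inter> C" "A \<inter> C \<subseteq> \<Omega>" using A by auto
    then show ?thesis
      unfolding weighted_cond_def a_def b_def k_def
      using sum_layered_weights[OF fcp fin, of "A \<inter> C"] sum_layered_weights[OF fcp fin C(1)] by simp
  qed
  ultimately show ?thesis by simp
qed

lemma expectation_layered_weights_tendsto:
  assumes fcp: "full_cond_prob \<Omega> Q" and fin: "finite \<Omega>" and ne: "\<Omega> \<noteq> {}"
    and e: "\<And>n. 0 < e n" "e \<longlonglongrightarrow> 0"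
  shows "(\<lambda>n. \<Sum>u\<in>\<Omega>. f u * weighted_cond (layered_weights \<Omega> Q (e n)) {u} \<Omega>) \<longlonglongrightarrow> (\<Sum>u\<in>\<Omega>. f u * Q {u} \<Omega>)"
proof (intro tendsto_sum tendsto_mult_left)
  fix u assume "u \<in> \<Omega>"
  then show "(\<lambda>n. weighted_cond (layered_weights \<Omega> Q (e n)) {u} \<Omega>) \<longlonglongrightarrow> Q {u} \<Omega>"
    by (intro weighted_cond_layered_weights_tendsto[OF fcp fin _ order_refl ne e]) auto
qed
definition ancestral :: "'n set \<Rightarrow> ('n \<Rightarrow> 'n set) \<Rightarrow> 'n set \<Rightarrow> bool" where
  "ancestral G par S \<longleftrightarrow> S \<subseteq> G \<and> (\<forall>s\<in>S. par s \<subseteq> S)"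

lemma ancestral_if_parents_set_empty:
  "K \<subseteq> G \<Longrightarrow> parents_set par K = {} \<Longrightarrow> ancestral G par K"
  unfolding ancestral_def parents_set_def by blast

lemma mem_edges_iff: "(p, s) \<in> edges G par \<longleftrightarrow> s \<in> G \<and> p \<in> G \<and> p \<in> par s"
  unfolding edges_def by simp

lemma ancestral_trancl_edges:
  assumes anc: "ancestral G par S" and tr: "(a, t) \<in> (edges G par)\<^sup>+"
  shows "t \<in> S \<Longrightarrow> a \<in> S \<and> (a, t) \<in> (edges S par)\<^sup>+"
  using tr
proof (induction rule: trancl_induct)
  case (base y)
  then have "a \<in> par y" using mem_edges_iff by fast
  then have "a \<in> S" using anc base(2) unfolding ancestral_def by blast
  then show ?case using base \<open>a \<in> par y\<close> by (simp add: mem_edges_iff r_into_trancl')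
next
  case (step y z)
  then have "y \<in> par z" using mem_edges_iff by fast
  then have yS: "y \<in> S" using anc step(4) unfolding ancestral_def by blast
  then have "a \<in> S \<and> (a, y) \<in> (edges S par)\<^sup>+" using step(3) by blast
  moreover have "(y, z) \<in> edges S par" using yS step(4) \<open>y \<in> par z\<close> by (simp add: mem_edges_iff)
  ultimately show ?case by (meson trancl_into_trancl)
qed

lemma edges_mono: "S \<subseteq> G \<Longrightarrow> edges S par \<subseteq> edges G par"
  unfolding edges_def by auto

lemma trancl_edges_target: "(a, b) \<in> (edges S par)\<^sup>+ \<Longrightarrow> b \<in> S"
  by (induction rule: trancl_induct) (auto simp: mem_edges_iff)

lemma desc_ancestral:
  assumes anc: "ancestral G par S" and s: "s \<in> S"
  shows "desc S par s = desc G par s \<inter> S"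
proof (intro set_eqI iffI)
  fix v assume "v \<in> desc S par s"
  then have v: "(s, v) \<in> (edges S par)\<^sup>+" unfolding desc_def by simp
  have "S \<subseteq> G" using anc unfolding ancestral_def by auto
  then have "(s, v) \<in> (edges G par)\<^sup>+" using v trancl_mono edges_mono by blast
  then show "v \<in> desc G par s \<inter> S" unfolding desc_def using trancl_edges_target[OF v] by simp
next
  fix v assume "v \<in> desc G par s \<inter> S"
  then show "v \<in> desc S par s" unfolding desc_def using ancestral_trancl_edges[OF anc] by blast
qed

lemma nondesc_ancestral:
  assumes anc: "ancestral G par S" and s: "s \<in> S"
  shows "nondesc S par s = nondesc G par s \<inter> S"
  using desc_ancestral[OF assms] anc unfolding nondesc_def ancestral_def by auto

lemma desc_subset: "desc G par s \<subseteq> G"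
  unfolding desc_def using trancl_edges_target by fast

lemma not_in_desc_self:
  assumes "acyclic (edges G par)"
  shows "s \<notin> desc G par s"
  using assms unfolding desc_def acyclic_def by simp

lemma parents_subset_nondesc:
  assumes acy: "acyclic (edges G par)" and s: "s \<in> G" and parG: "par s \<subseteq> G"
  shows "par s \<subseteq> nondesc G par s"
proof
  fix p assume p: "p \<in> par s"
  then have e: "(p, s) \<in> edges G par" using s parG by (auto simp: mem_edges_iff)
  have "p \<noteq> s" using e acy unfolding acyclic_def by blast
  moreover have "p \<notin> desc G par s"
  proof
    assume "p \<in> desc G par s"
    then have "(s, p) \<in> (edges G par)\<^sup>+" unfolding desc_def by simp
    then have "(s, s) \<in> (edges G par)\<^sup>+" using e by (meson trancl_into_trancl)
    then show False using acy unfolding acyclic_def by blast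
  qed
  ultimately show "p \<in> nondesc G par s" unfolding nondesc_def using p parG by auto
qed

lemma nondesc_parents_subset_nondesc:
  assumes d: "d \<in> nondesc G par s" and parG: "par d \<subseteq> G"
  shows "par d \<subseteq> nondesc G par s"
proof
  fix p assume p: "p \<in> par d"
  have dG: "d \<in> G" "d \<noteq> s" "d \<notin> desc G par s" using d unfolding nondesc_def by auto
  then have e: "(p, d) \<in> edges G par" using p parG by (auto simp: mem_edges_iff)
  have "p \<noteq> s"
  proof
    assume "p = s"
    then have "d \<in> desc G par s" using e unfolding desc_def by auto
    then show False using dG by simp
  qed
  moreover have "p \<notin> desc G par s"
  proof
    assume "p \<in> desc G par s"
    then have "(s, d) \<in> (edges G par)\<^sup>+" using e unfolding desc_def by (meson trancl_into_trancl mem_Collect_eq)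
    then show False using dG unfolding desc_def by simp
  qed
  ultimately show "p \<in> nondesc G par s" unfolding nondesc_def using p parG by auto
qed

lemma ancestral_Int_desc:
  assumes anc: "ancestral G par B" and "s \<notin> B"
  shows "B \<inter> desc G par s = {}"
  using ancestral_trancl_edges[OF anc] assms(2) unfolding desc_def by blast

lemma ancestral_subset_nondesc:
  assumes anc: "ancestral G par B" and "s \<notin> B"
  shows "B \<subseteq> nondesc G par s"
  using ancestral_Int_desc[OF assms] assms anc unfolding nondesc_def ancestral_def by auto

lemma nondesc_partition:
  assumes s: "s \<in> G"
  shows "G = nondesc G par s \<union> {s} \<union> desc G par s" "s \<notin> nondesc G par s"
    "nondesc G par s \<inter> desc G par s = {}" "nondesc G par s \<subseteq> G"
  using s desc_subset[of G par s] unfolding nondesc_def by auto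

lemma not_in_parents_self:
  assumes acy: "acyclic (edges G par)" and d: "d \<in> G"
  shows "d \<notin> par d"
proof
  assume "d \<in> par d"
  then have "(d, d) \<in> edges G par" using d by (simp add: mem_edges_iff)
  then show False using acy unfolding acyclic_def by blast
qed

lemma finite_edges: "finite G \<Longrightarrow> finite (edges G par)"
  unfolding edges_def by (rule finite_subset[of _ "G \<times> G"]) auto

lemma acyclic_obtain_parentless:
  assumes fin: "finite G" and acy: "acyclic (edges G par)" and S: "S \<subseteq> G" "S \<noteq> {}"
  obtains t where "t \<in> S" "par t \<inter> S = {}"
proof -
  define R where "R = {(p, t). p \<in> S \<and> t \<in> S \<and> p \<in> par t}"
  have "R \<subseteq> edges G par" using S unfolding R_def edges_def by auto
  then have "wf R"
    using finite_edges[OF fin] acyclic_subset[OF acy] by (meson finite_acyclic_wf finite_subset)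
  moreover obtain a where "a \<in> S" using S by blast
  ultimately obtain t where "t \<in> S" "\<And>p. (p, t) \<in> R \<Longrightarrow> p \<notin> S"
    using wfE_min by metis
  then show ?thesis using that unfolding R_def by blast
qed

lemma ancestral_nondesc'_set:
  assumes parG: "\<And>s. s \<in> G \<Longrightarrow> par s \<subseteq> G" and K: "parents_set par K = {}"
  shows "ancestral G par (nondesc'_set G par K)"
proof -
  have N: "nondesc'_set G par K = G - (K \<union> desc_set G par K)"
    unfolding nondesc'_set_def nondesc_set_def K by simp
  have "p \<in> nondesc'_set G par K" if s: "s \<in> nondesc'_set G par K" and p: "p \<in> par s" for s p
  proof -
    have sG: "s \<in> G" and sK: "s \<notin> K" and sD: "s \<notin> desc_set G par K" using s unfolding N by auto
    have pG: "p \<in> G" using parG[OF sG] p by auto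
    have e: "(p, s) \<in> edges G par" using p pG sG by (simp add: mem_edges_iff)
    have "p \<notin> K"
    proof
      assume pK: "p \<in> K"
      have "s \<in> desc G par p" unfolding desc_def using e by auto
      then have "s \<in> desc_set G par K" unfolding desc_set_def using pK sK by auto
      then show False using sD by simp
    qed
    moreover have "p \<notin> desc_set G par K"
    proof
      assume "p \<in> desc_set G par K"
      then obtain k where k: "k \<in> K" "(k, p) \<in> (edges G par)\<^sup>+" unfolding desc_set_def desc_def by auto
      then have "(k, s) \<in> (edges G par)\<^sup>+" using e by (meson trancl_into_trancl)
      then have "s \<in> desc_set G par K" unfolding desc_set_def desc_def using k sK by auto
      then show False using sD by simp
    qed
    ultimately show ?thesis unfolding N using pG by auto
  qed
  moreover have "nondesc'_set G par K \<subseteq> G" unfolding N by blast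
  ultimately show ?thesis unfolding ancestral_def by blast
qed

lemma credal_network_finite: "credal_network G par X M \<Longrightarrow> finite G"
  unfolding credal_network_def by simp

lemma credal_network_finite_states: "credal_network G par X M \<Longrightarrow> i \<in> G \<Longrightarrow> finite (X i)"
  unfolding credal_network_def by simp

lemma credal_network_states_nonempty: "credal_network G par X M \<Longrightarrow> i \<in> G \<Longrightarrow> X i \<noteq> {}"
  unfolding credal_network_def by simp

lemma credal_network_PiE_nonempty: "credal_network G par X M \<Longrightarrow> PiE G X \<noteq> {}"
  unfolding credal_network_def by (simp add: PiE_eq_empty_iff)

lemma credal_network_acyclic: "credal_network G par X M \<Longrightarrow> acyclic (edges G par)"
  unfolding credal_network_def by simp

lemma credal_network_parents: "credal_network G par X M \<Longrightarrow> s \<in> G \<Longrightarrow> par s \<subseteq> G"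
  unfolding credal_network_def by simp

lemma credal_network_local_model:
  assumes "credal_network G par X M" "s \<in> G" "c \<in> PiE (par s) X"
  shows "M s c \<noteq> {}" "pw_convex (M s c)" "\<And>p. p \<in> M s c \<Longrightarrow> is_pmf_on (X s) p"
  using assms unfolding credal_network_def by auto

definition fiber :: "('n \<Rightarrow> 'v set) \<Rightarrow> 'n set \<Rightarrow> 'n set \<Rightarrow> ('n \<Rightarrow> 'v) \<Rightarrow> ('n \<Rightarrow> 'v) set" where
  "fiber X W V x = {u \<in> PiE W X. \<forall>i\<in>V. u i = x i}"

definition depends_on :: "(('n \<Rightarrow> 'v) \<Rightarrow> real) \<Rightarrow> 'n set \<Rightarrow> bool" where
  "depends_on F A \<longleftrightarrow> (\<forall>z z'. (\<forall>i\<in>A. z i = z' i) \<longrightarrow> F z = F z')"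

lemma depends_onD: "depends_on F A \<Longrightarrow> (\<And>i. i \<in> A \<Longrightarrow> z i = z' i) \<Longrightarrow> F z = F z'"
  unfolding depends_on_def by blast

lemma depends_on_prod_nondesc:
  assumes qdep: "\<And>d. d \<in> Dset \<Longrightarrow> depends_on (q d) (insert d (par d))"
    and parG: "\<And>d. d \<in> G \<Longrightarrow> par d \<subseteq> G" and DG: "Dset \<subseteq> G"
  shows "depends_on (\<lambda>z. \<Prod>d\<in>Dset \<inter> nondesc G par s. q d z) (nondesc G par s)"
  unfolding depends_on_def
proof (intro allI impI)
  fix z z' :: "'a \<Rightarrow> 'b" assume h: "\<forall>i\<in>nondesc G par s. z i = z' i"
  show "(\<Prod>d\<in>Dset \<inter> nondesc G par s. q d z) = (\<Prod>d\<in>Dset \<inter> nondesc G par s. q d z')"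
  proof (rule prod.cong[OF refl])
    fix d assume d: "d \<in> Dset \<inter> nondesc G par s"
    have "par d \<subseteq> nondesc G par s" using nondesc_parents_subset_nondesc[of d G par s] d parG DG by blast
    then have "insert d (par d) \<subseteq> nondesc G par s" using d by blast
    then show "q d z = q d z'" using depends_onD[OF qdep[of d]] d h by blast
  qed
qed

lemma depends_on_restrict:
  assumes "B \<subseteq> U"
  shows "depends_on (\<lambda>z. g (restrict z B)) U"
  unfolding depends_on_def
proof (intro allI impI)
  fix z z' :: "'a \<Rightarrow> 'b" assume "\<forall>i\<in>U. z i = z' i"
  then have "restrict z B = restrict z' B" using assms by (auto simp: restrict_def fun_eq_iff)
  then show "g (restrict z B) = g (restrict z' B)" by simp
qed

lemma depends_on_mult:
  assumes "depends_on F U" "depends_on H U"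
  shows "depends_on (\<lambda>z. F z * H z) U"
  using assms unfolding depends_on_def by metis

lemma restrict_PiE_subset: "z \<in> PiE G X \<Longrightarrow> B \<subseteq> G \<Longrightarrow> restrict z B \<in> PiE B X"
  by (auto simp: PiE_iff)

lemma fiber_empty: "fiber X W {} x = PiE W X" unfolding fiber_def by simp

lemma finite_fiber:
  assumes "finite W" "\<And>i. i \<in> W \<Longrightarrow> finite (X i)"
  shows "finite (fiber X W V x)"
proof -
  have "finite (PiE W X)" using assms by (intro finite_PiE) auto
  then show ?thesis unfolding fiber_def by (rule rev_finite_subset) auto
qed

lemma fiber_subset_PiE: "fiber X W V x \<subseteq> PiE W X" unfolding fiber_def by auto

lemma sum_fiber_split_node:
  fixes F :: "('n \<Rightarrow> 'v) \<Rightarrow> real"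
  assumes fin: "finite G" "\<And>i. i \<in> G \<Longrightarrow> finite (X i)" and t: "t \<in> G" "t \<notin> V"
  shows "sum F (fiber X G V x) = (\<Sum>y\<in>X t. sum F (fiber X G (insert t V) (x(t := y))))"
proof -
  have eq: "{z \<in> fiber X G V x. z t = y} = fiber X G (insert t V) (x(t := y))" for y
    using t unfolding fiber_def by auto
  have "sum F (fiber X G V x) = (\<Sum>y\<in>X t. sum F {z \<in> fiber X G V x. z t = y})"
    using finite_fiber[OF fin] fin t
    by (intro sum.group[symmetric]) (auto simp: fiber_def PiE_iff)
  then show ?thesis unfolding eq .
qed

lemma sum_fiber_group:
  fixes F :: "('n \<Rightarrow> 'v) \<Rightarrow> real"
  assumes fin: "finite G" "\<And>i. i \<in> G \<Longrightarrow> finite (X i)" and W: "W \<subseteq> G"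
  shows "sum F (fiber X G V x) = (\<Sum>u\<in>fiber X W (V \<inter> W) x. sum F (fiber X G (V \<union> W) (override_on x u W)))"
proof -
  have finW: "finite W" using W fin finite_subset by auto
  have eq: "{z \<in> fiber X G V x. restrict z W = u} = fiber X G (V \<union> W) (override_on x u W)"
    if u: "u \<in> fiber X W (V \<inter> W) x" for u
  proof (intro set_eqI iffI)
    fix z assume "z \<in> {z \<in> fiber X G V x. restrict z W = u}"
    then show "z \<in> fiber X G (V \<union> W) (override_on x u W)"
      unfolding fiber_def override_on_def by (auto dest: fun_cong[where x=i for i])
  next
    fix z assume z: "z \<in> fiber X G (V \<union> W) (override_on x u W)"
    have "restrict z W = u"
    proof
      fix i show "restrict z W i = u i"
        using z u unfolding fiber_def override_on_def by (cases "i \<in> W") (auto simp: PiE_iff extensional_def)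
    qed
    moreover have "z \<in> fiber X G V x"
      using z u unfolding fiber_def override_on_def by auto
    ultimately show "z \<in> {z \<in> fiber X G V x. restrict z W = u}" by simp
  qed
  have "sum F (fiber X G V x) = (\<Sum>u\<in>fiber X W (V \<inter> W) x. sum F {z \<in> fiber X G V x. restrict z W = u})"
    using finite_fiber[OF fin, where V=V and x=x] finite_fiber[OF finW, where X=X and V="V \<inter> W" and x=x] fin W
    by (intro sum.group[symmetric]) (auto simp: fiber_def PiE_iff)
  also have "\<dots> = (\<Sum>u\<in>fiber X W (V \<inter> W) x. sum F (fiber X G (V \<union> W) (override_on x u W)))"
    by (rule sum.cong[OF refl]) (simp add: eq)
  finally show ?thesis .
qed

lemma override_on_PiE:
  assumes "u \<in> PiE W X" "x \<in> PiE G X" "W \<subseteq> G"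
  shows "override_on x u W \<in> PiE G X"
  using assms unfolding override_on_def by (auto simp: PiE_iff extensional_def)

lemma fiber_all:
  assumes "x \<in> PiE G X"
  shows "fiber X G G x = {x}"
  using assms unfolding fiber_def by (auto intro: PiE_ext)

text \<open>Summing out the nodes of S, one parentless node at a time, from a product of local
kernels leaves total mass 1.\<close>

lemma sum_fiber_prod_kernels:
  fixes q :: "'n \<Rightarrow> ('n \<Rightarrow> 'v) \<Rightarrow> real"
  assumes fin: "finite G" "\<And>i. i \<in> G \<Longrightarrow> finite (X i)" and acy: "acyclic (edges G par)"
    and S: "S \<subseteq> G"
    and local: "\<And>t. t \<in> S \<Longrightarrow> depends_on (q t) (insert t (par t))"
    and norm: "\<And>t z. t \<in> S \<Longrightarrow> z \<in> PiE G X \<Longrightarrow> (\<Sum>y\<in>X t. q t (z(t := y))) = 1"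
    and x: "x \<in> PiE G X"
  shows "(\<Sum>z\<in>fiber X G (G - S) x. \<Prod>t\<in>S. q t z) = 1"
  using S local norm x
proof (induction "card S" arbitrary: S x rule: less_induct)
  case less
  note S = less.prems(1) and local = less.prems(2) and norm = less.prems(3) and x = less.prems(4)
  show ?case
  proof (cases "S = {}")
    case True
    then show ?thesis using fiber_all[OF x] by simp
  next
    case False
    obtain t where t: "t \<in> S" "par t \<inter> S = {}"
      using acyclic_obtain_parentless[OF fin(1) acy S False] by blast
    define S' where "S' = S - {t}"
    have finS: "finite S" using S fin(1) finite_subset by auto
    have tG: "t \<in> G" using t S by auto
    have IH: "(\<Sum>z\<in>fiber X G (G - S') (x(t := y)). \<Prod>t\<in>S'. q t z) = 1" if "y \<in> X t" for y
    proof (rule less.hyps)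
      show "card S' < card S" unfolding S'_def using card_Diff1_less[OF finS t(1)] .
      show "x(t := y) \<in> PiE G X" using x that tG by (auto simp: PiE_iff extensional_def)
      show "S' \<subseteq> G" using S unfolding S'_def by blast
      show "depends_on (q t') (insert t' (par t'))" if "t' \<in> S'" for t'
        using local that unfolding S'_def by blast
      show "(\<Sum>y\<in>X t'. q t' (z(t' := y))) = 1" if "t' \<in> S'" "z \<in> PiE G X" for t' z
        using norm that unfolding S'_def by blast
    qed
    have factor: "q t z = q t (x(t := y))" if z: "z \<in> fiber X G (G - S') (x(t := y))" for y z
    proof (rule depends_onD[OF local[OF t(1)]])
      fix i assume i: "i \<in> insert t (par t)"
      show "z i = (x(t := y)) i"
      proof (cases "i \<in> G")
        case True
        then have "i \<in> G - S'" using i t unfolding S'_def by auto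
        then show ?thesis using z unfolding fiber_def by auto
      next
        case False
        then show ?thesis using z x tG unfolding fiber_def by (auto simp: PiE_iff extensional_def)
      qed
    qed
    have "(\<Sum>z\<in>fiber X G (G - S) x. \<Prod>t\<in>S. q t z)
        = (\<Sum>y\<in>X t. \<Sum>z\<in>fiber X G (G - S') (x(t := y)). \<Prod>t\<in>S. q t z)"
    proof -
      have "insert t (G - S) = G - S'" unfolding S'_def using t S by auto
      then show ?thesis using sum_fiber_split_node[OF fin tG, where V="G - S" and x=x and F="\<lambda>z. \<Prod>t\<in>S. q t z"] t
      by auto
    qed
    also have "\<dots> = (\<Sum>y\<in>X t. q t (x(t := y)) * (\<Sum>z\<in>fiber X G (G - S') (x(t := y)). \<Prod>t\<in>S'. q t z))"
      unfolding sum_distrib_left S'_def using finS t(1) factor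
      by (intro sum.cong refl) (simp add: prod.remove S'_def)
    also have "\<dots> = (\<Sum>y\<in>X t. q t (x(t := y)))"
      using IH by simp
    also have "\<dots> = 1" using norm[OF t(1) x] .
    finally show ?thesis .
  qed
qed

lemma pw_convex_sum:
  fixes p :: "'i \<Rightarrow> 'v \<Rightarrow> real"
  assumes cv: "pw_convex C" and fin: "finite I"
    and w: "\<And>i. i \<in> I \<Longrightarrow> 0 \<le> w i" "sum w I = 1" and p: "\<And>i. i \<in> I \<Longrightarrow> p i \<in> C"
  shows "(\<lambda>y. \<Sum>i\<in>I. w i * p i y) \<in> C"
  using fin w p
proof (induction I arbitrary: w rule: finite_induct)
  case empty
  then show ?case by simp
next
  case (insert a I)
  have wa: "0 \<le> w a" using insert.prems by simp
  have sI: "0 \<le> sum w I" using insert.prems by (intro sum_nonneg) auto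
  have tot: "w a + sum w I = 1" using insert.prems insert.hyps by simp
  show ?case
  proof (cases "sum w I = 0")
    case True
    have z: "w i = 0" if "i \<in> I" for i
    proof -
      have "\<forall>i\<in>I. w i = 0" using True sum_nonneg_eq_0_iff[OF insert.hyps(1), of w] insert.prems(1) by simp
      then show ?thesis using that by blast
    qed
    have "w a = 1" using tot True by simp
    then have "(\<lambda>y. \<Sum>i\<in>insert a I. w i * p i y) = p a"
      using z insert.hyps by (auto simp: fun_eq_iff)
    then show ?thesis using insert.prems by simp
  next
    case False
    then have spos: "0 < sum w I" using sI by simp
    define w' where "w' i = w i / sum w I" for i
    have "(\<lambda>y. \<Sum>i\<in>I. w' i * p i y) \<in> C"
    proof (rule insert.IH)
      show "\<And>i. i \<in> I \<Longrightarrow> 0 \<le> w' i" unfolding w'_def using insert.prems spos by simp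
      show "sum w' I = 1" unfolding w'_def using spos by (simp add: sum_divide_distrib[symmetric])
      show "\<And>i. i \<in> I \<Longrightarrow> p i \<in> C" using insert.prems by simp
    qed
    moreover have "p a \<in> C" using insert.prems by simp
    ultimately have "(\<lambda>y. w a * p a y + (1 - w a) * (\<Sum>i\<in>I. w' i * p i y)) \<in> C"
    proof -
      have h: "\<forall>p\<in>C. \<forall>q\<in>C. \<forall>t::real. 0 \<le> t \<and> t \<le> 1 \<longrightarrow> (\<lambda>y. t * p y + (1 - t) * q y) \<in> C"
        using cv unfolding pw_convex_def .
      moreover have "0 \<le> w a \<and> w a \<le> 1" using wa tot sI by linarith
      show ?thesis
        by (rule h[rule_format, of "p a" "\<lambda>y. \<Sum>i\<in>I. w' i * p i y" "w a"])
          (use \<open>p a \<in> C\<close> \<open>(\<lambda>y. \<Sum>i\<in>I. w' i * p i y) \<in> C\<close> \<open>0 \<le> w a \<and> w a \<le> 1\<close> in auto)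
    qed
    moreover have "(\<lambda>y. w a * p a y + (1 - w a) * (\<Sum>i\<in>I. w' i * p i y)) = (\<lambda>y. \<Sum>i\<in>insert a I. w i * p i y)"
    proof
      fix y
      have "1 - w a = sum w I" using tot by simp
      then have "(1 - w a) * (\<Sum>i\<in>I. w' i * p i y) = (\<Sum>i\<in>I. w i * p i y)"
        using spos unfolding w'_def sum_distrib_left by (intro sum.cong) auto
      then show "w a * p a y + (1 - w a) * (\<Sum>i\<in>I. w' i * p i y) = (\<Sum>i\<in>insert a I. w i * p i y)"
        using insert.hyps by simp
    qed
    ultimately show ?thesis by simp
  qed
qed

definition marginal :: "('n \<Rightarrow> 'v set) \<Rightarrow> 'n set \<Rightarrow> (('n \<Rightarrow> 'v) set \<Rightarrow> ('n \<Rightarrow> 'v) set \<Rightarrow> real) \<Rightarrow> 'n set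
   \<Rightarrow> ('n \<Rightarrow> 'v) set \<Rightarrow> ('n \<Rightarrow> 'v) set \<Rightarrow> real" where
  "marginal X G P S A B = P {z \<in> PiE G X. restrict z S \<in> A} {z \<in> PiE G X. restrict z S \<in> B}"

lemma restrict_surj_PiE:
  assumes ne: "PiE G X \<noteq> {}" and S: "S \<subseteq> G" and u: "u \<in> PiE S X"
  shows "\<exists>z\<in>PiE G X. restrict z S = u"
proof -
  obtain x0 where x0: "x0 \<in> PiE G X" using ne by blast
  have "override_on x0 u S \<in> PiE G X" by (rule override_on_PiE[OF u x0 S])
  moreover have "restrict (override_on x0 u S) S = u"
    using u unfolding override_on_def by (auto simp: PiE_iff extensional_def fun_eq_iff)
  ultimately show ?thesis by blast
qed

lemma full_cond_prob_marginal:
  assumes fc: "full_cond_prob (PiE G X) P" and ne: "PiE G X \<noteq> {}" and S: "S \<subseteq> G"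
  shows "full_cond_prob (PiE S X) (marginal X G P S)"
proof -
  define pre where "pre A = {z \<in> PiE G X. restrict z S \<in> A}" for A
  have mp: "marginal X G P S A B = P (pre A) (pre B)" for A B unfolding marginal_def pre_def by simp
  have pre_sub: "pre A \<subseteq> PiE G X" for A unfolding pre_def by auto
  have pre_all: "pre (PiE S X) = PiE G X" unfolding pre_def using S by (auto simp: PiE_iff extensional_def)
  have pre_int: "pre (A \<inter> C) = pre A \<inter> pre C" for A C unfolding pre_def by auto
  have pre_un: "pre (A \<union> C) = pre A \<union> pre C" for A C unfolding pre_def by auto
  have pre_disj: "A \<inter> C = {} \<Longrightarrow> pre A \<inter> pre C = {}" for A C unfolding pre_def by auto
  have pre_ne: "pre B \<noteq> {}" if "B \<subseteq> PiE S X" "B \<noteq> {}" for B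
  proof -
    from that(2) obtain u where "u \<in> B" by blast
    have uS: "u \<in> PiE S X" using that \<open>u \<in> B\<close> by auto
    have "\<exists>z\<in>PiE G X. restrict z S = u" by (rule restrict_surj_PiE[OF ne S uS])
    then obtain z where "z \<in> PiE G X" "restrict z S = u" by blast
    then show ?thesis unfolding pre_def using \<open>u \<in> B\<close> by auto
  qed
  show ?thesis
    unfolding full_cond_prob_def mp
  proof (intro conjI allI impI)
    fix B A assume B: "B \<subseteq> PiE S X" "B \<noteq> {}" and A: "A \<subseteq> PiE S X"
    show "0 \<le> P (pre A) (pre B)" using full_cond_prob_nonneg[OF fc pre_sub pre_ne[OF B] pre_sub] .
  next
    fix B assume B: "B \<subseteq> PiE S X" "B \<noteq> {}"
    show "P (pre (PiE S X)) (pre B) = 1" using full_cond_prob_total[OF fc pre_sub pre_ne[OF B]] pre_all by simp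
  next
    fix B assume B: "B \<subseteq> PiE S X" "B \<noteq> {}"
    show "P (pre B) (pre B) = 1" using full_cond_prob_self[OF fc pre_sub pre_ne[OF B]] .
  next
    fix B A1 A2 assume B: "B \<subseteq> PiE S X" "B \<noteq> {}" and A: "A1 \<subseteq> PiE S X" "A2 \<subseteq> PiE S X" "A1 \<inter> A2 = {}"
    show "P (pre (A1 \<union> A2)) (pre B) = P (pre A1) (pre B) + P (pre A2) (pre B)"
      unfolding pre_un using full_cond_prob_Un[OF fc pre_sub pre_ne[OF B] pre_sub pre_sub pre_disj[OF A(3)]] .
  next
    fix A B C assume h: "A \<subseteq> PiE S X" "B \<subseteq> PiE S X" "C \<subseteq> PiE S X" "B \<noteq> {}" "C \<inter> B \<noteq> {}"
    have "pre C \<inter> pre B \<noteq> {}" using pre_ne[of "C \<inter> B"] h unfolding pre_int by auto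
    then show "P (pre (A \<inter> C)) (pre B) = P (pre A) (pre (C \<inter> B)) * P (pre C) (pre B)"
      unfolding pre_int using full_cond_prob_mult[OF fc pre_sub pre_sub pre_sub pre_ne[OF h(2,4)]] by simp
  qed
qed

lemma restrict_eq_iff:
  assumes "x \<in> PiE V X"
  shows "restrict z V = x \<longleftrightarrow> (\<forall>i\<in>V. z i = x i)"
  using assms by (auto simp: PiE_iff extensional_def fun_eq_iff)

lemma restrict_preimage_UN:
  assumes "V \<subseteq> W" "W \<subseteq> G"
  shows "{z \<in> PiE G X. restrict z V = x}
    = (\<Union>x'\<in>{x' \<in> PiE W X. restrict x' V = x}. {z \<in> PiE G X. restrict z W = x'})"
proof (intro set_eqI iffI)
  fix z assume z: "z \<in> {z \<in> PiE G X. restrict z V = x}"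
  then have "restrict z W \<in> PiE W X" "restrict (restrict z W) V = x"
    using assms by (auto simp: PiE_iff Int_absorb1)
  then show "z \<in> (\<Union>x'\<in>{x' \<in> PiE W X. restrict x' V = x}. {z \<in> PiE G X. restrict z W = x'})"
    using z by blast
next
  fix z assume "z \<in> (\<Union>x'\<in>{x' \<in> PiE W X. restrict x' V = x}. {z \<in> PiE G X. restrict z W = x'})"
  then show "z \<in> {z \<in> PiE G X. restrict z V = x}"
    using assms(1) by (auto simp: Int_absorb1)
qed

text \<open>Conditioning on the non-descendants of s within S mixes the conditionals given all
non-descendants of s in G, which lie in the local credal set; convexity does the rest.\<close>

lemma marginal_irr_ext:
  assumes cn: "credal_network G par X M" and P: "P \<in> irr_ext G par X M" and anc: "ancestral G par S"
  shows "marginal X G P S \<in> irr_ext S par X M"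
proof -
  have fc: "full_cond_prob (PiE G X) P" using P unfolding irr_ext_def by simp
  have SG: "S \<subseteq> G" using anc unfolding ancestral_def by simp
  have ne: "PiE G X \<noteq> {}" using credal_network_PiE_nonempty[OF cn] .
  have "(\<lambda>y. marginal X G P S {z\<in>PiE S X. z s = y} {z\<in>PiE S X. restrict z (nondesc S par s) = x})
      \<in> M s (restrict x (par s))" if s: "s \<in> S" and x: "x \<in> PiE (nondesc S par s) X" for s x
  proof -
    have sG: "s \<in> G" using s SG by auto
    define W where "W = nondesc G par s"
    define V where "V = nondesc S par s"
    have VW: "V = W \<inter> S" unfolding V_def W_def using nondesc_ancestral[OF anc s] .
    have WG: "W \<subseteq> G" unfolding W_def nondesc_def by auto
    have parV: "par s \<subseteq> V"
      using parents_subset_nondesc[OF credal_network_acyclic[OF cn] sG credal_network_parents[OF cn sG]]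
        anc s unfolding VW W_def ancestral_def by auto
    define A where "A y = {z\<in>PiE G X. z s = y}" for y
    define B where "B = {z\<in>PiE G X. restrict z V = x}"
    define E where "E = {x' \<in> PiE W X. restrict x' V = x}"
    define C where "C x' = {z\<in>PiE G X. restrict z W = x'}" for x'
    have B_UN: "B = (\<Union>x'\<in>E. C x')"
      unfolding B_def C_def E_def using VW WG by (intro restrict_preimage_UN) auto
    have B_ne: "B \<noteq> {}"
    proof -
      have VG: "V \<subseteq> G" using VW WG by auto
      have xV: "x \<in> PiE V X" using x unfolding V_def .
      have "\<exists>z\<in>PiE G X. restrict z V = x"
        by (rule restrict_surj_PiE[OF ne VG xV])
      then show ?thesis unfolding B_def by auto
    qed
    have C_ne: "C x' \<noteq> {}" if "x' \<in> E" for x'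
    proof -
      have xW: "x' \<in> PiE W X" using that unfolding E_def by simp
      have "\<exists>z\<in>PiE G X. restrict z W = x'"
        by (rule restrict_surj_PiE[OF ne WG xW])
      then show ?thesis unfolding C_def by auto
    qed
    have "finite (PiE W X)"
      using credal_network_finite[OF cn] credal_network_finite_states[OF cn] WG
      by (intro finite_PiE) (auto intro: finite_subset)
    then have finE: "finite E" unfolding E_def by simp
    have C_disj: "C x' \<inter> C x'' = {}" if "x' \<in> E" "x'' \<in> E" "x' \<noteq> x''" for x' x''
      using that(3) unfolding C_def by auto
    have "A y \<subseteq> PiE G X" "B \<subseteq> PiE G X" for y unfolding A_def B_def by auto
    note total = full_cond_prob_total_probability[OF fc finE this B_ne B_UN C_ne C_disj]
    have xpar: "restrict x (par s) \<in> PiE (par s) X" using x parV unfolding V_def by (auto simp: PiE_iff)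
    have local: "(\<lambda>y. P (A y) (C x')) \<in> M s (restrict x (par s))" if "x' \<in> E" for x'
    proof -
      have "x' \<in> PiE W X" and "restrict x' (par s) = restrict x (par s)"
        using that parV unfolding E_def by (auto simp: Int_absorb1 restrict_restrict[symmetric])
      moreover have "(\<lambda>y. P (A y) (C x')) \<in> M s (restrict x' (par s))"
        using P sG \<open>x' \<in> PiE W X\<close> unfolding irr_ext_def A_def C_def W_def by blast
      ultimately show ?thesis by simp
    qed
    have "(\<lambda>y. \<Sum>x'\<in>E. P (C x') B * P (A y) (C x')) \<in> M s (restrict x (par s))"
    proof (rule pw_convex_sum[OF credal_network_local_model(2)[OF cn sG xpar] finE,
          where w="\<lambda>x'. P (C x') B" and p="\<lambda>x' y. P (A y) (C x')"])
      show "0 \<le> P (C x') B" for x'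
        using full_cond_prob_nonneg[OF fc _ B_ne] unfolding B_def C_def by auto
    qed (use total(2) local in blast)+
    moreover have "marginal X G P S {z\<in>PiE S X. z s = y} {z\<in>PiE S X. restrict z V = x} = P (A y) B" for y
    proof -
      have "{z \<in> PiE G X. restrict z S \<in> {z\<in>PiE S X. z s = y}} = A y"
        unfolding A_def using s SG by (auto simp: PiE_iff)
      moreover have "{z \<in> PiE G X. restrict z S \<in> {z\<in>PiE S X. restrict z V = x}} = B"
        unfolding B_def using SG VW by (auto simp: PiE_iff)
      ultimately show ?thesis unfolding marginal_def by simp
    qed
    ultimately show ?thesis
      unfolding V_def[symmetric] by (simp add: total(1))
  qed
  then show ?thesis unfolding irr_ext_def using full_cond_prob_marginal[OF fc ne SG] by simp
qed

lemma sum_marginal: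
  assumes fc: "full_cond_prob (PiE G X) P" and ne: "PiE G X \<noteq> {}" and S: "S \<subseteq> G"
    and finG: "finite G" and finX: "\<And>i. i \<in> G \<Longrightarrow> finite (X i)"
  shows "(\<Sum>z\<in>PiE G X. g (restrict z S) * P {z} (PiE G X)) = (\<Sum>u\<in>PiE S X. g u * marginal X G P S {u} (PiE S X))"
proof -
  have fG: "finite (PiE G X)" using finG finX by (intro finite_PiE) auto
  have fS: "finite (PiE S X)" using finG finX S finite_subset by (intro finite_PiE) auto
  have pre_all: "{z \<in> PiE G X. restrict z S \<in> PiE S X} = PiE G X" using S by (auto simp: PiE_iff extensional_def)
  have "(\<Sum>z\<in>PiE G X. g (restrict z S) * P {z} (PiE G X))
      = (\<Sum>u\<in>PiE S X. \<Sum>z\<in>{z \<in> PiE G X. restrict z S = u}. g (restrict z S) * P {z} (PiE G X))"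
    using fG fS S by (intro sum.group[symmetric]) (auto simp: PiE_iff extensional_def)
  also have "\<dots> = (\<Sum>u\<in>PiE S X. g u * marginal X G P S {u} (PiE S X))"
  proof (rule sum.cong[OF refl])
    fix u assume u: "u \<in> PiE S X"
    have "marginal X G P S {u} (PiE S X) = P {z \<in> PiE G X. restrict z S = u} (PiE G X)"
      unfolding marginal_def pre_all by simp
    also have "\<dots> = (\<Sum>z\<in>{z \<in> PiE G X. restrict z S = u}. P {z} (PiE G X))"
      using fG ne by (intro full_cond_prob_sum_singletons[OF fc]) auto
    finally show "(\<Sum>z\<in>{z \<in> PiE G X. restrict z S = u}. g (restrict z S) * P {z} (PiE G X)) = g u * marginal X G P S {u} (PiE S X)"
      by (simp add: sum_distrib_left)
  qed
  finally show ?thesis .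
qed

lemma prod_split_nondesc_desc:
  assumes s: "s \<notin> Dset" and DG: "Dset \<subseteq> G" and sG: "s \<in> G" and finG: "finite G"
  shows "(\<Prod>d\<in>Dset. q d z) = (\<Prod>d\<in>Dset \<inter> nondesc G par s. q d z) * (\<Prod>d\<in>Dset \<inter> desc G par s. q d z)"
proof -
  have e: "Dset = (Dset \<inter> nondesc G par s) \<union> (Dset \<inter> desc G par s)"
    using s DG nondesc_partition(1)[OF sG, of par] by blast
  have d: "(Dset \<inter> nondesc G par s) \<inter> (Dset \<inter> desc G par s) = {}"
    using nondesc_partition(3)[OF sG, of par] by blast
  have f: "finite Dset" using DG finG finite_subset by auto
  have "(\<Prod>d\<in>Dset. q d z) = (\<Prod>d\<in>(Dset \<inter> nondesc G par s) \<union> (Dset \<inter> desc G par s). q d z)"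
    using e by simp
  also have "\<dots> = (\<Prod>d\<in>Dset \<inter> nondesc G par s. q d z) * (\<Prod>d\<in>Dset \<inter> desc G par s. q d z)"
    by (rule prod.union_disjoint) (use f d in auto)
  finally show ?thesis .
qed

text \<open>Under a weight g(z|B) C(z) times local kernels of the other nodes, conditioning s \<in> B on
its non-descendants sees only the block factor g: the kernels of the descendants outside B
sum out to 1, and C depends only on the non-descendants.\<close>

lemma sum_fiber_block_weight:
  fixes g C :: "('n \<Rightarrow> 'v) \<Rightarrow> real" and q :: "'n \<Rightarrow> ('n \<Rightarrow> 'v) \<Rightarrow> real"
  assumes finG: "finite G" and finX: "\<And>i. i \<in> G \<Longrightarrow> finite (X i)" and acy: "acyclic (edges G par)"
    and B: "B \<subseteq> G" and T': "T' \<subseteq> G" "G - T' = U \<union> B"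
    and V: "U \<subseteq> V" "V \<subseteq> U \<union> B"
    and Cdep: "depends_on C U"
    and qdep: "\<And>d. d \<in> T' \<Longrightarrow> depends_on (q d) (insert d (par d))"
    and qnorm: "\<And>d z. d \<in> T' \<Longrightarrow> z \<in> PiE G X \<Longrightarrow> (\<Sum>y\<in>X d. q d (z(d := y))) = 1"
    and x: "x \<in> PiE G X"
  shows "(\<Sum>z\<in>fiber X G V x. g (restrict z B) * C z * (\<Prod>d\<in>T'. q d z))
       = C x * (\<Sum>u\<in>fiber X B (V \<inter> B) x. g u)"
proof -
  have "(\<Sum>z\<in>fiber X G V x. g (restrict z B) * C z * (\<Prod>d\<in>T'. q d z))
      = (\<Sum>u\<in>fiber X B (V \<inter> B) x. \<Sum>z\<in>fiber X G (V \<union> B) (override_on x u B). g (restrict z B) * C z * (\<Prod>d\<in>T'. q d z))"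
    by (rule sum_fiber_group[OF finG finX B])
  also have "\<dots> = (\<Sum>u\<in>fiber X B (V \<inter> B) x. C x * g u)"
  proof (rule sum.cong[OF refl])
    fix u assume u: "u \<in> fiber X B (V \<inter> B) x"
    have uP: "u \<in> PiE B X" using u unfolding fiber_def by simp
    have mP: "override_on x u B \<in> PiE G X" by (rule override_on_PiE[OF uP x B])
    have VB: "V \<union> B = G - T'" using V T' by auto
    have inner: "(\<Sum>z\<in>fiber X G (V \<union> B) (override_on x u B). \<Prod>d\<in>T'. q d z) = 1"
      unfolding VB by (rule sum_fiber_prod_kernels[OF finG finX acy T'(1) qdep qnorm mP])
    have "(\<Sum>z\<in>fiber X G (V \<union> B) (override_on x u B). g (restrict z B) * C z * (\<Prod>d\<in>T'. q d z))
        = (\<Sum>z\<in>fiber X G (V \<union> B) (override_on x u B). (C x * g u) * (\<Prod>d\<in>T'. q d z))"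
    proof (rule sum.cong[OF refl])
      fix z assume z: "z \<in> fiber X G (V \<union> B) (override_on x u B)"
      have zi: "\<And>i. i \<in> V \<union> B \<Longrightarrow> z i = override_on x u B i" using z unfolding fiber_def by blast
      have zP: "z \<in> PiE G X" using z unfolding fiber_def by blast
      have "restrict z B = u"
      proof (rule ext)
        fix i show "restrict z B i = u i"
        proof (cases "i \<in> B")
          case True then show ?thesis using zi[of i] unfolding override_on_def by simp
        next
          case False then show ?thesis using uP by (simp add: PiE_iff extensional_def)
        qed
      qed
      moreover have "C z = C x"
      proof (rule depends_onD[OF Cdep])
        fix i assume i: "i \<in> U"
        then have "z i = override_on x u B i" using zi V by blast
        moreover have "override_on x u B i = x i"
        proof (cases "i \<in> B")
          case True
          then have "i \<in> V \<inter> B" using i V by blast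
          then show ?thesis using u True unfolding fiber_def override_on_def by simp
        next
          case False then show ?thesis unfolding override_on_def by simp
        qed
        ultimately show "z i = x i" by simp
      qed
      ultimately show "g (restrict z B) * C z * (\<Prod>d\<in>T'. q d z) = (C x * g u) * (\<Prod>d\<in>T'. q d z)"
        by simp
    qed
    also have "\<dots> = C x * g u" unfolding sum_distrib_left[symmetric] inner by simp
    finally show "(\<Sum>z\<in>fiber X G (V \<union> B) (override_on x u B). g (restrict z B) * C z * (\<Prod>d\<in>T'. q d z)) = C x * g u" .
  qed
  also have "\<dots> = C x * (\<Sum>u\<in>fiber X B (V \<inter> B) x. g u)" by (simp add: sum_distrib_left)
  finally show ?thesis .
qed

lemma weighted_cond_block_factor:
  fixes g C :: "('n \<Rightarrow> 'v) \<Rightarrow> real" and q :: "'n \<Rightarrow> ('n \<Rightarrow> 'v) \<Rightarrow> real"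
  assumes finG: "finite G" and finX: "\<And>i. i \<in> G \<Longrightarrow> finite (X i)" and acy: "acyclic (edges G par)"
    and B: "B \<subseteq> G" "s \<in> B" and Dd: "Dset \<subseteq> G" "Dset \<inter> B = {}" "desc G par s \<subseteq> B \<union> Dset"
    and Cdep: "depends_on C (nondesc G par s)" and Cpos: "0 < C x"
    and qdep: "\<And>d. d \<in> Dset \<inter> desc G par s \<Longrightarrow> depends_on (q d) (insert d (par d))"
    and qnorm: "\<And>d z. d \<in> Dset \<inter> desc G par s \<Longrightarrow> z \<in> PiE G X \<Longrightarrow> (\<Sum>y\<in>X d. q d (z(d := y))) = 1"
    and x: "x \<in> PiE G X" and y: "y \<in> X s"
  shows "weighted_cond (\<lambda>z. g (restrict z B) * C z * (\<Prod>d\<in>Dset \<inter> desc G par s. q d z))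
            {z \<in> PiE G X. z s = y} (fiber X G (nondesc G par s) x)
       = weighted_cond g {u \<in> PiE B X. u s = y} (fiber X B (nondesc G par s \<inter> B) x)"
proof -
  define U where "U = nondesc G par s"
  define T' where "T' = Dset \<inter> desc G par s"
  have sG: "s \<in> G" using B by auto
  note spl = nondesc_partition[OF sG, of par, folded U_def]
  have T'G: "T' \<subseteq> G" unfolding T'_def using Dd by auto
  have GT: "G - T' = U \<union> B"
  proof
    show "G - T' \<subseteq> U \<union> B"
    proof
      fix i assume i: "i \<in> G - T'"
      then have "i \<in> U \<or> i = s \<or> i \<in> desc G par s" using spl(1) by blast
      then show "i \<in> U \<union> B" using i B Dd unfolding T'_def by blast
    qed
    show "U \<union> B \<subseteq> G - T'" using spl B Dd unfolding T'_def by blast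
  qed
  have xy: "x(s := y) \<in> PiE G X" using x y sG by (auto simp: PiE_iff extensional_def)
  have Cxy: "C (x(s := y)) = C x"
    by (rule depends_onD[OF Cdep[folded U_def]]) (use spl(2) in auto)
  define w where "w z = g (restrict z B) * C z * (\<Prod>d\<in>T'. q d z)" for z
  have num_set: "{z \<in> PiE G X. z s = y} \<inter> fiber X G U x = fiber X G (insert s U) (x(s := y))"
    unfolding fiber_def using spl(2) by auto
  have num_set2: "{u \<in> PiE B X. u s = y} \<inter> fiber X B (U \<inter> B) x = fiber X B (insert s U \<inter> B) (x(s := y))"
    unfolding fiber_def using spl(2) B by auto
  have s1: "sum w (fiber X G (insert s U) (x(s := y))) = C x * sum g (fiber X B (insert s U \<inter> B) (x(s := y)))"
    unfolding w_def Cxy[symmetric]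
    by (rule sum_fiber_block_weight[OF finG finX acy B(1) T'G GT _ _ Cdep[folded U_def] qdep[folded T'_def] qnorm[folded T'_def] xy])
      (use B in auto)
  have s2: "sum w (fiber X G U x) = C x * sum g (fiber X B (U \<inter> B) x)"
    unfolding w_def
    by (rule sum_fiber_block_weight[OF finG finX acy B(1) T'G GT _ _ Cdep[folded U_def] qdep[folded T'_def] qnorm[folded T'_def] x])
      auto
  show ?thesis
    unfolding weighted_cond_def U_def[symmetric] T'_def[symmetric] w_def[symmetric] num_set num_set2 s1 s2
    using Cpos by simp
qed

lemma weighted_cond_node_factor:
  fixes C :: "('n \<Rightarrow> 'v) \<Rightarrow> real" and q :: "'n \<Rightarrow> ('n \<Rightarrow> 'v) \<Rightarrow> real"
  assumes finG: "finite G" and finX: "\<And>i. i \<in> G \<Longrightarrow> finite (X i)" and acy: "acyclic (edges G par)"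
    and sG: "s \<in> G" and parG: "par s \<subseteq> G"
    and Cdep: "depends_on C (nondesc G par s)" and Cpos: "0 < C x"
    and qdep: "\<And>d. d \<in> insert s (desc G par s) \<Longrightarrow> depends_on (q d) (insert d (par d))"
    and qnorm: "\<And>d z. d \<in> insert s (desc G par s) \<Longrightarrow> z \<in> PiE G X \<Longrightarrow> (\<Sum>y\<in>X d. q d (z(d := y))) = 1"
    and x: "x \<in> PiE G X" and y: "y \<in> X s"
  shows "weighted_cond (\<lambda>z. C z * q s z * (\<Prod>d\<in>desc G par s. q d z))
            {z \<in> PiE G X. z s = y} (fiber X G (nondesc G par s) x) = q s (x(s := y))"
proof -
  define U where "U = nondesc G par s"
  define T where "T = desc G par s"
  note spl = nondesc_partition[OF sG, of par, folded U_def T_def]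
  have parU: "par s \<subseteq> U" unfolding U_def by (rule parents_subset_nondesc[OF acy sG parG])
  have TG: "T \<subseteq> G" unfolding T_def by (rule desc_subset)
  have sT: "s \<notin> T" unfolding T_def by (rule not_in_desc_self[OF acy])
  have GT: "G - T = insert s U" using spl sT by auto
  define w where "w z = C z * q s z * (\<Prod>d\<in>T. q d z)" for z
  have piece: "sum w (fiber X G (insert s U) (x(s := y'))) = C x * q s (x(s := y'))" if y': "y' \<in> X s" for y'
  proof -
    have xy: "x(s := y') \<in> PiE G X" using x y' sG by (auto simp: PiE_iff extensional_def)
    have "sum w (fiber X G (insert s U) (x(s := y'))) = (\<Sum>z\<in>fiber X G (insert s U) (x(s := y')). (C x * q s (x(s := y'))) * (\<Prod>d\<in>T. q d z))"
    proof (rule sum.cong[OF refl])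
      fix z assume z: "z \<in> fiber X G (insert s U) (x(s := y'))"
      have zi: "\<And>i. i \<in> insert s U \<Longrightarrow> z i = (x(s := y')) i" using z unfolding fiber_def by blast
      have zP: "z \<in> PiE G X" using z unfolding fiber_def by blast
      have "C z = C x"
        by (rule depends_onD[OF Cdep[folded U_def]]) (use zi spl(2) in force)
      moreover have "q s z = q s (x(s := y'))"
      proof (rule depends_onD[OF qdep[of s]])
        show "s \<in> insert s (desc G par s)" by simp
        fix i assume "i \<in> insert s (par s)"
        then have "i \<in> insert s U" using parU by blast
        then show "z i = (x(s := y')) i" by (rule zi)
      qed
      ultimately show "w z = (C x * q s (x(s := y'))) * (\<Prod>d\<in>T. q d z)" unfolding w_def by simp
    qed
    also have "\<dots> = (C x * q s (x(s := y'))) * (\<Sum>z\<in>fiber X G (G - T) (x(s := y')). \<Prod>d\<in>T. q d z)"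
      unfolding GT sum_distrib_left by simp
    also have "(\<Sum>z\<in>fiber X G (G - T) (x(s := y')). \<Prod>d\<in>T. q d z) = 1"
      by (rule sum_fiber_prod_kernels[OF finG finX acy TG]) (use qdep qnorm xy in \<open>auto simp: T_def\<close>)
    finally show ?thesis by (simp only: mult_1_right)
  qed
  have num_set: "{z \<in> PiE G X. z s = y} \<inter> fiber X G U x = fiber X G (insert s U) (x(s := y))"
    unfolding fiber_def using spl(2) by auto
  have den: "sum w (fiber X G U x) = C x"
  proof -
    have "sum w (fiber X G U x) = (\<Sum>y'\<in>X s. sum w (fiber X G (insert s U) (x(s := y'))))"
      by (rule sum_fiber_split_node[OF finG finX sG spl(2)])
    also have "\<dots> = (\<Sum>y'\<in>X s. C x * q s (x(s := y')))" by (rule sum.cong[OF refl]) (rule piece)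
    also have "\<dots> = C x * (\<Sum>y'\<in>X s. q s (x(s := y')))" by (simp add: sum_distrib_left)
    also have "(\<Sum>y'\<in>X s. q s (x(s := y'))) = 1" by (rule qnorm[OF _ x]) simp
    finally show ?thesis by simp
  qed
  show ?thesis
    unfolding weighted_cond_def U_def[symmetric] T_def[symmetric] w_def[symmetric] num_set den piece[OF y]
    using Cpos by simp
qed

lemma sum_block_weight_split:
  fixes F r1 r2 :: "('n \<Rightarrow> 'v) \<Rightarrow> real" and q :: "'n \<Rightarrow> ('n \<Rightarrow> 'v) \<Rightarrow> real"
  assumes finG: "finite G" and finX: "\<And>i. i \<in> G \<Longrightarrow> finite (X i)" and acy: "acyclic (edges G par)"
    and B: "B1 \<subseteq> G" "B2 \<subseteq> G" "B1 \<inter> B2 = {}" and Dd: "Dset \<subseteq> G" "G - Dset = B1 \<union> B2"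
    and qdep: "\<And>d. d \<in> Dset \<Longrightarrow> depends_on (q d) (insert d (par d))"
    and qnorm: "\<And>d z. d \<in> Dset \<Longrightarrow> z \<in> PiE G X \<Longrightarrow> (\<Sum>y\<in>X d. q d (z(d := y))) = 1"
    and x0: "x0 \<in> PiE G X"
  shows "(\<Sum>z\<in>PiE G X. F (restrict z B1) * (r1 (restrict z B1) * r2 (restrict z B2) * (\<Prod>d\<in>Dset. q d z)))
       = (\<Sum>v\<in>PiE B2 X. r2 v) * (\<Sum>u\<in>PiE B1 X. F u * r1 u)"
proof -
  have "(\<Sum>z\<in>PiE G X. F (restrict z B1) * (r1 (restrict z B1) * r2 (restrict z B2) * (\<Prod>d\<in>Dset. q d z)))
      = (\<Sum>z\<in>fiber X G {} x0. F (restrict z B1) * (r1 (restrict z B1) * r2 (restrict z B2) * (\<Prod>d\<in>Dset. q d z)))"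
    by (simp add: fiber_empty)
  also have "\<dots> = (\<Sum>u\<in>fiber X B1 ({} \<inter> B1) x0. \<Sum>z\<in>fiber X G ({} \<union> B1) (override_on x0 u B1).
        F (restrict z B1) * (r1 (restrict z B1) * r2 (restrict z B2) * (\<Prod>d\<in>Dset. q d z)))"
    by (rule sum_fiber_group[OF finG finX B(1)])
  also have "\<dots> = (\<Sum>u\<in>PiE B1 X. F u * r1 u * (\<Sum>v\<in>PiE B2 X. r2 v))"
  proof (rule sum.cong)
    show "fiber X B1 ({} \<inter> B1) x0 = PiE B1 X" by (simp add: fiber_empty)
  next
    fix u assume u: "u \<in> PiE B1 X"
    have mP: "override_on x0 u B1 \<in> PiE G X" by (rule override_on_PiE[OF u x0 B(1)])
    have "(\<Sum>z\<in>fiber X G ({} \<union> B1) (override_on x0 u B1).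
        F (restrict z B1) * (r1 (restrict z B1) * r2 (restrict z B2) * (\<Prod>d\<in>Dset. q d z)))
      = (\<Sum>z\<in>fiber X G B1 (override_on x0 u B1). (F u * r1 u) * (r2 (restrict z B2) * (\<lambda>_. 1) z * (\<Prod>d\<in>Dset. q d z)))"
    proof (rule sum.cong)
      fix z assume z: "z \<in> fiber X G B1 (override_on x0 u B1)"
      have "restrict z B1 = u"
      proof (rule ext)
        fix i show "restrict z B1 i = u i"
        proof (cases "i \<in> B1")
          case True then show ?thesis using z unfolding fiber_def override_on_def by simp
        next
          case False then show ?thesis using u by (simp add: PiE_iff extensional_def)
        qed
      qed
      then show "F (restrict z B1) * (r1 (restrict z B1) * r2 (restrict z B2) * (\<Prod>d\<in>Dset. q d z))
          = (F u * r1 u) * (r2 (restrict z B2) * (\<lambda>_. 1) z * (\<Prod>d\<in>Dset. q d z))" by simp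
    qed simp
    also have "\<dots> = (F u * r1 u) * (\<Sum>z\<in>fiber X G B1 (override_on x0 u B1). r2 (restrict z B2) * (\<lambda>_. 1) z * (\<Prod>d\<in>Dset. q d z))"
      by (simp add: sum_distrib_left)
    also have "(\<Sum>z\<in>fiber X G B1 (override_on x0 u B1). r2 (restrict z B2) * (\<lambda>_. 1) z * (\<Prod>d\<in>Dset. q d z))
        = (\<lambda>_. 1) (override_on x0 u B1) * (\<Sum>v\<in>fiber X B2 (B1 \<inter> B2) (override_on x0 u B1). r2 v)"
      by (rule sum_fiber_block_weight[OF finG finX acy B(2) Dd(1) Dd(2) _ _ _ qdep qnorm mP]) (auto simp: depends_on_def)
    also have "fiber X B2 (B1 \<inter> B2) (override_on x0 u B1) = PiE B2 X" using B(3) by (simp add: fiber_empty)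
    finally show "(\<Sum>z\<in>fiber X G ({} \<union> B1) (override_on x0 u B1).
        F (restrict z B1) * (r1 (restrict z B1) * r2 (restrict z B2) * (\<Prod>d\<in>Dset. q d z)))
      = F u * r1 u * (\<Sum>v\<in>PiE B2 X. r2 v)" by (simp add: restrict_def)
  qed
  also have "\<dots> = (\<Sum>v\<in>PiE B2 X. r2 v) * (\<Sum>u\<in>PiE B1 X. F u * r1 u)"
    by (simp add: sum_distrib_left sum_distrib_right mult.commute mult.left_commute)
  finally show ?thesis .
qed

lemma weighted_cond_block_node_tendsto:
  fixes w g' :: "nat \<Rightarrow> ('n \<Rightarrow> 'v) \<Rightarrow> real" and q :: "nat \<Rightarrow> 'n \<Rightarrow> ('n \<Rightarrow> 'v) \<Rightarrow> real" and e :: "nat \<Rightarrow> real"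
  assumes cn: "credal_network G par X M"
    and ac1: "ancestral G par Ba" and ac2: "ancestral G par Bb" and disj: "Ba \<inter> Bb = {}"
    and Dset: "Dset = G - Ba - Bb"
    and fca: "full_cond_prob (PiE Ba X) Qa"
    and e: "\<And>n. 0 < e n" "e \<longlonglongrightarrow> 0"
    and wdef: "\<And>n z. w n z = layered_weights (PiE Ba X) Qa (e n) (restrict z Ba) * g' n (restrict z Bb) * (\<Prod>d\<in>Dset. q n d z)"
    and g'pos: "\<And>n v. v \<in> PiE Bb X \<Longrightarrow> 0 < g' n v"
    and qdep: "\<And>n d. d \<in> Dset \<Longrightarrow> depends_on (q n d) (insert d (par d))"
    and qnorm: "\<And>n d z. d \<in> Dset \<Longrightarrow> z \<in> PiE G X \<Longrightarrow> (\<Sum>y\<in>X d. q n d (z(d := y))) = 1"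
    and qpos: "\<And>n d z. d \<in> Dset \<Longrightarrow> z \<in> PiE G X \<Longrightarrow> 0 < q n d z"
    and s: "s \<in> Ba" and x: "x \<in> PiE G X" and y: "y \<in> X s"
  shows "(\<lambda>n. weighted_cond (w n) {z \<in> PiE G X. z s = y} (fiber X G (nondesc G par s) x))
     \<longlonglongrightarrow> Qa {u \<in> PiE Ba X. u s = y} (fiber X Ba (nondesc G par s \<inter> Ba) x)"
proof -
  define U where "U = nondesc G par s"
  have BaG: "Ba \<subseteq> G" and BbG: "Bb \<subseteq> G" using ac1 ac2 unfolding ancestral_def by auto
  have sG: "s \<in> G" using s BaG by auto
  have sD: "s \<notin> Dset" using s Dset by auto
  have DG: "Dset \<subseteq> G" using Dset by auto
  have sBb: "s \<notin> Bb" using s disj by auto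
  have BbU: "Bb \<subseteq> U" unfolding U_def by (rule ancestral_subset_nondesc[OF ac2 sBb])
  have descD: "desc G par s \<subseteq> Ba \<union> Dset"
    using ancestral_Int_desc[OF ac2 sBb] desc_subset[of G par s] Dset by blast
  define C where "C n z = g' n (restrict z Bb) * (\<Prod>d\<in>Dset \<inter> U. q n d z)" for n z
  have weq: "w n = (\<lambda>z. layered_weights (PiE Ba X) Qa (e n) (restrict z Ba) * C n z * (\<Prod>d\<in>Dset \<inter> desc G par s. q n d z))" for n
  proof
    fix z
    show "w n z = layered_weights (PiE Ba X) Qa (e n) (restrict z Ba) * C n z * (\<Prod>d\<in>Dset \<inter> desc G par s. q n d z)"
      unfolding wdef C_def U_def prod_split_nondesc_desc[OF sD DG sG credal_network_finite[OF cn], of "q n" z par] by (simp add: mult.assoc)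
  qed
  have Cdep: "depends_on (C n) U" for n
    unfolding C_def
    by (rule depends_on_mult[OF depends_on_restrict[OF BbU]]) (unfold U_def, rule depends_on_prod_nondesc[OF qdep credal_network_parents[OF cn] DG])
  have Cpos: "0 < C n x" for n
  proof -
    have "0 < g' n (restrict x Bb)" using g'pos restrict_PiE_subset[OF x BbG] by blast
    moreover have "0 < (\<Prod>d\<in>Dset \<inter> U. q n d x)" using qpos[OF _ x] by (intro prod_pos) auto
    ultimately show ?thesis unfolding C_def by simp
  qed
  have eqn: "weighted_cond (w n) {z \<in> PiE G X. z s = y} (fiber X G U x)
      = weighted_cond (layered_weights (PiE Ba X) Qa (e n)) {u \<in> PiE Ba X. u s = y} (fiber X Ba (U \<inter> Ba) x)" for n
  proof -
    have DBa: "Dset \<inter> Ba = {}" using Dset by auto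
    have qd: "depends_on (q n d) (insert d (par d))" if "d \<in> Dset \<inter> desc G par s" for d
      using qdep that by blast
    have qn: "(\<Sum>y\<in>X d. q n d (z(d := y))) = 1" if "d \<in> Dset \<inter> desc G par s" "z \<in> PiE G X" for d z
      using qnorm that by blast
    show ?thesis unfolding weq U_def
      by (rule weighted_cond_block_factor[OF credal_network_finite[OF cn] credal_network_finite_states[OF cn] credal_network_acyclic[OF cn] BaG s DG DBa descD Cdep[unfolded U_def] Cpos qd qn x y])
  qed
  have finA: "finite (PiE Ba X)" using credal_network_finite[OF cn] credal_network_finite_states[OF cn] BaG finite_subset by (intro finite_PiE) auto
  have Csub: "fiber X Ba (U \<inter> Ba) x \<subseteq> PiE Ba X" by (rule fiber_subset_PiE)
  have Cne: "fiber X Ba (U \<inter> Ba) x \<noteq> {}"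
  proof -
    have "restrict x Ba \<in> fiber X Ba (U \<inter> Ba) x" unfolding fiber_def using restrict_PiE_subset[OF x BaG] by auto
    then show ?thesis by blast
  qed
  have "(\<lambda>n. weighted_cond (layered_weights (PiE Ba X) Qa (e n)) {u \<in> PiE Ba X. u s = y} (fiber X Ba (U \<inter> Ba) x))
      \<longlonglongrightarrow> Qa {u \<in> PiE Ba X. u s = y} (fiber X Ba (U \<inter> Ba) x)"
    by (rule weighted_cond_layered_weights_tendsto[OF fca finA _ Csub Cne e]) auto
  then show ?thesis unfolding U_def[symmetric] eqn .
qed

lemma weighted_cond_kernel_node:
  fixes w g1 g2 :: "('n \<Rightarrow> 'v) \<Rightarrow> real" and q :: "'n \<Rightarrow> ('n \<Rightarrow> 'v) \<Rightarrow> real"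
  assumes cn: "credal_network G par X M"
    and ac1: "ancestral G par B1" and ac2: "ancestral G par B2"
    and Dset: "Dset = G - B1 - B2"
    and wdef: "\<And>z. w z = g1 (restrict z B1) * g2 (restrict z B2) * (\<Prod>d\<in>Dset. q d z)"
    and g1pos: "\<And>v. v \<in> PiE B1 X \<Longrightarrow> 0 < g1 v" and g2pos: "\<And>v. v \<in> PiE B2 X \<Longrightarrow> 0 < g2 v"
    and qdep: "\<And>d. d \<in> Dset \<Longrightarrow> depends_on (q d) (insert d (par d))"
    and qnorm: "\<And>d z. d \<in> Dset \<Longrightarrow> z \<in> PiE G X \<Longrightarrow> (\<Sum>y\<in>X d. q d (z(d := y))) = 1"
    and qpos: "\<And>d z. d \<in> Dset \<Longrightarrow> z \<in> PiE G X \<Longrightarrow> 0 < q d z"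
    and s: "s \<in> Dset" and x: "x \<in> PiE G X" and y: "y \<in> X s"
  shows "weighted_cond w {z \<in> PiE G X. z s = y} (fiber X G (nondesc G par s) x) = q s (x(s := y))"
proof -
  define U where "U = nondesc G par s"
  define T where "T = desc G par s"
  have B1G: "B1 \<subseteq> G" and B2G: "B2 \<subseteq> G" using ac1 ac2 unfolding ancestral_def by auto
  have sG: "s \<in> G" using s Dset by auto
  have DG: "Dset \<subseteq> G" using Dset by auto
  have sB1: "s \<notin> B1" and sB2: "s \<notin> B2" using s Dset by auto
  have B1U: "B1 \<subseteq> U" unfolding U_def by (rule ancestral_subset_nondesc[OF ac1 sB1])
  have B2U: "B2 \<subseteq> U" unfolding U_def by (rule ancestral_subset_nondesc[OF ac2 sB2])
  have TD: "T \<subseteq> Dset"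
    using ancestral_Int_desc[OF ac1 sB1] ancestral_Int_desc[OF ac2 sB2] desc_subset[of G par s] Dset unfolding T_def by blast
  note spl = nondesc_partition[OF sG, of par, folded U_def T_def]
  have sT: "s \<notin> T" unfolding T_def by (rule not_in_desc_self[OF credal_network_acyclic[OF cn]])
  have finD: "finite Dset" using DG credal_network_finite[OF cn] finite_subset by auto
  have Dsplit: "Dset - {s} = (Dset \<inter> U) \<union> T" using spl TD sT DG by blast
  have Ddisj: "(Dset \<inter> U) \<inter> T = {}" using spl by blast
  define C where "C z = g1 (restrict z B1) * g2 (restrict z B2) * (\<Prod>d\<in>Dset \<inter> U. q d z)" for z
  have weq: "w = (\<lambda>z. C z * q s z * (\<Prod>d\<in>desc G par s. q d z))"
  proof
    fix z
    have "(\<Prod>d\<in>Dset. q d z) = q s z * (\<Prod>d\<in>Dset - {s}. q d z)" using finD s by (simp add: prod.remove)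
    also have "(\<Prod>d\<in>Dset - {s}. q d z) = (\<Prod>d\<in>Dset \<inter> U. q d z) * (\<Prod>d\<in>T. q d z)"
      unfolding Dsplit by (rule prod.union_disjoint) (use finD TD Ddisj in \<open>auto intro: finite_subset\<close>)
    finally show "w z = C z * q s z * (\<Prod>d\<in>desc G par s. q d z)"
      unfolding wdef C_def T_def[symmetric] by (simp add: ac_simps)
  qed
  have Cdep: "depends_on C U"
    unfolding C_def
    by (rule depends_on_mult[OF depends_on_mult[OF depends_on_restrict[OF B1U] depends_on_restrict[OF B2U]]])
      (unfold U_def, rule depends_on_prod_nondesc[OF qdep credal_network_parents[OF cn] DG])
  have Cpos: "0 < C x"
  proof -
    have "0 < g1 (restrict x B1)" using g1pos restrict_PiE_subset[OF x B1G] by blast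
    moreover have "0 < g2 (restrict x B2)" using g2pos restrict_PiE_subset[OF x B2G] by blast
    moreover have "0 < (\<Prod>d\<in>Dset \<inter> U. q d x)" using qpos[OF _ x] by (intro prod_pos) auto
    ultimately show ?thesis unfolding C_def by simp
  qed
  have qd: "depends_on (q d) (insert d (par d))" if "d \<in> insert s (desc G par s)" for d
    using qdep that TD s unfolding T_def by blast
  have qn: "(\<Sum>y\<in>X d. q d (z(d := y))) = 1" if "d \<in> insert s (desc G par s)" "z \<in> PiE G X" for d z
    using qnorm that TD s unfolding T_def by blast
  show ?thesis unfolding weq
    by (rule weighted_cond_node_factor[OF credal_network_finite[OF cn] credal_network_finite_states[OF cn] credal_network_acyclic[OF cn] sG credal_network_parents[OF cn sG] Cdep[unfolded U_def] Cpos qd qn x y])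
qed

lemma sum_weighted_cond_block:
  fixes w g1 g2 F :: "('n \<Rightarrow> 'v) \<Rightarrow> real" and q :: "'n \<Rightarrow> ('n \<Rightarrow> 'v) \<Rightarrow> real"
  assumes cn: "credal_network G par X M"
    and B: "B1 \<subseteq> G" "B2 \<subseteq> G" "B1 \<inter> B2 = {}"
    and Dset: "Dset = G - B1 - B2"
    and wdef: "\<And>z. w z = g1 (restrict z B1) * g2 (restrict z B2) * (\<Prod>d\<in>Dset. q d z)"
    and g1pos: "\<And>v. v \<in> PiE B1 X \<Longrightarrow> 0 < g1 v" and g2pos: "\<And>v. v \<in> PiE B2 X \<Longrightarrow> 0 < g2 v"
    and qdep: "\<And>d. d \<in> Dset \<Longrightarrow> depends_on (q d) (insert d (par d))"
    and qnorm: "\<And>d z. d \<in> Dset \<Longrightarrow> z \<in> PiE G X \<Longrightarrow> (\<Sum>y\<in>X d. q d (z(d := y))) = 1"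
  shows "(\<Sum>z\<in>PiE G X. F (restrict z B1) * weighted_cond w {z} (PiE G X)) = (\<Sum>u\<in>PiE B1 X. F u * weighted_cond g1 {u} (PiE B1 X))"
proof -
  have DG: "Dset \<subseteq> G" and GD: "G - Dset = B1 \<union> B2" using Dset B by auto
  have "PiE G X \<noteq> {}" using credal_network_states_nonempty[OF cn] by (simp add: PiE_eq_empty_iff)
  then obtain x0 where x0: "x0 \<in> PiE G X" by blast
  have fin1: "finite (PiE B1 X)" using credal_network_finite[OF cn] credal_network_finite_states[OF cn] B(1) finite_subset by (intro finite_PiE) auto
  have fin2: "finite (PiE B2 X)" using credal_network_finite[OF cn] credal_network_finite_states[OF cn] B(2) finite_subset by (intro finite_PiE) auto
  have ne1: "PiE B1 X \<noteq> {}" using credal_network_states_nonempty[OF cn] B(1) by (auto simp: PiE_eq_empty_iff)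
  have ne2: "PiE B2 X \<noteq> {}" using credal_network_states_nonempty[OF cn] B(2) by (auto simp: PiE_eq_empty_iff)
  define Z1 where "Z1 = (\<Sum>u\<in>PiE B1 X. g1 u)"
  define Z2 where "Z2 = (\<Sum>u\<in>PiE B2 X. g2 u)"
  have Z1: "0 < Z1" unfolding Z1_def using fin1 ne1 g1pos by (intro sum_pos) auto
  have Z2: "0 < Z2" unfolding Z2_def using fin2 ne2 g2pos by (intro sum_pos) auto
  have EL: "(\<Sum>z\<in>PiE G X. H (restrict z B1) * w z) = Z2 * (\<Sum>u\<in>PiE B1 X. H u * g1 u)" for H
    unfolding wdef Z2_def
    by (rule sum_block_weight_split[OF credal_network_finite[OF cn] credal_network_finite_states[OF cn] credal_network_acyclic[OF cn] B DG GD qdep qnorm x0])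
  have W: "(\<Sum>z\<in>PiE G X. w z) = Z2 * Z1"
    using EL[of "\<lambda>_. 1"] unfolding Z1_def by simp
  have "(\<Sum>z\<in>PiE G X. F (restrict z B1) * weighted_cond w {z} (PiE G X)) = (\<Sum>z\<in>PiE G X. F (restrict z B1) * w z) / (Z2 * Z1)"
    unfolding weighted_cond_def W[symmetric] sum_divide_distrib
    by (rule sum.cong[OF refl]) simp
  also have "\<dots> = (\<Sum>u\<in>PiE B1 X. F u * g1 u) / Z1" unfolding EL using Z2 by simp
  also have "\<dots> = (\<Sum>u\<in>PiE B1 X. F u * weighted_cond g1 {u} (PiE B1 X))"
    unfolding weighted_cond_def Z1_def[symmetric] sum_divide_distrib
    by (rule sum.cong[OF refl]) simp
  finally show ?thesis .
qed

text \<open>Mixing a selected element of each local credal set with the uniform distribution yields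
strictly positive local kernels, which converge to the selected elements as the mixing weight
tends to 0.\<close>

definition selected_pmf :: "('n \<Rightarrow> ('n \<Rightarrow> 'v) \<Rightarrow> ('v \<Rightarrow> real) set) \<Rightarrow> 'n \<Rightarrow> ('n \<Rightarrow> 'v) \<Rightarrow> 'v \<Rightarrow> real" where
  "selected_pmf M d c = (SOME p. p \<in> M d c)"

definition perturbed_kernel ::
  "('n \<Rightarrow> 'v set) \<Rightarrow> ('n \<Rightarrow> 'n set) \<Rightarrow> ('n \<Rightarrow> ('n \<Rightarrow> 'v) \<Rightarrow> ('v \<Rightarrow> real) set) \<Rightarrow> real
    \<Rightarrow> 'n \<Rightarrow> ('n \<Rightarrow> 'v) \<Rightarrow> real" where
  "perturbed_kernel X par M e d z =
     (1 - e) * selected_pmf M d (restrict z (par d)) (z d)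
     + e * (if z d \<in> X d then 1 / real (card (X d)) else 0)"

lemma selected_pmf:
  assumes cn: "credal_network G par X M" and d: "d \<in> G" and c: "c \<in> PiE (par d) X"
  shows "selected_pmf M d c \<in> M d c" "is_pmf_on (X d) (selected_pmf M d c)"
  using credal_network_local_model[OF cn d c] unfolding selected_pmf_def by (metis ex_in_conv someI_ex)+

lemma depends_on_perturbed_kernel:
  fixes X :: "'n \<Rightarrow> 'v set"
  shows "depends_on (perturbed_kernel X par M e d) (insert d (par d))"
  unfolding depends_on_def
proof (intro allI impI)
  fix z z' :: "'n \<Rightarrow> 'v" assume "\<forall>i\<in>insert d (par d). z i = z' i"
  moreover from this have "restrict z (par d) = restrict z' (par d)" by (auto simp: fun_eq_iff)
  ultimately show "perturbed_kernel X par M e d z = perturbed_kernel X par M e d z'"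
    unfolding perturbed_kernel_def by simp
qed

lemma perturbed_kernel_upd:
  assumes cn: "credal_network G par X M" and d: "d \<in> G" and y: "y \<in> X d"
  shows "perturbed_kernel X par M e d (z(d := y))
    = (1 - e) * selected_pmf M d (restrict z (par d)) y + e / real (card (X d))"
proof -
  have "d \<notin> par d" by (rule not_in_parents_self[OF credal_network_acyclic[OF cn] d])
  then have "restrict (z(d := y)) (par d) = restrict z (par d)" by (auto simp: fun_eq_iff)
  then show ?thesis unfolding perturbed_kernel_def using y by simp
qed

lemma sum_perturbed_kernel:
  assumes cn: "credal_network G par X M" and d: "d \<in> G" and z: "z \<in> PiE G X"
  shows "(\<Sum>y\<in>X d. perturbed_kernel X par M e d (z(d := y))) = 1"
proof -
  have "restrict z (par d) \<in> PiE (par d) X" using z credal_network_parents[OF cn d] by (auto simp: PiE_iff)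
  then have "(\<Sum>y\<in>X d. selected_pmf M d (restrict z (par d)) y) = 1"
    using selected_pmf(2)[OF cn d] unfolding is_pmf_on_def by simp
  moreover have "0 < card (X d)"
    using credal_network_finite_states[OF cn d] credal_network_states_nonempty[OF cn d] by (simp add: card_gt_0_iff)
  ultimately show ?thesis
    using perturbed_kernel_upd[OF cn d] by (simp add: sum.distrib sum_distrib_left[symmetric])
qed

lemma perturbed_kernel_pos:
  assumes cn: "credal_network G par X M" and e: "0 < e" "e < 1" and d: "d \<in> G" and z: "z \<in> PiE G X"
  shows "0 < perturbed_kernel X par M e d z"
proof -
  have "restrict z (par d) \<in> PiE (par d) X" using z credal_network_parents[OF cn d] by (auto simp: PiE_iff)
  then have "0 \<le> (1 - e) * selected_pmf M d (restrict z (par d)) (z d)"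
    using selected_pmf(2)[OF cn d] e unfolding is_pmf_on_def by simp
  moreover have "z d \<in> X d" using z d by (auto simp: PiE_iff)
  moreover have "0 < card (X d)"
    using credal_network_finite_states[OF cn d] credal_network_states_nonempty[OF cn d] by (simp add: card_gt_0_iff)
  ultimately show ?thesis unfolding perturbed_kernel_def using e by (simp add: add_nonneg_pos)
qed

text \<open>Conditioning on a full configuration of the non-descendants of s is all that has to be
checked: any configuration of the non-descendants extends to one of G.\<close>

lemma irr_ext_if_local_on_fibers:
  assumes cn: "credal_network G par X M" and fcP: "full_cond_prob (PiE G X) P"
    and local: "\<And>s x. s \<in> G \<Longrightarrow> x \<in> PiE G X \<Longrightarrow>
      (\<lambda>y. P {z\<in>PiE G X. z s = y} (fiber X G (nondesc G par s) x)) \<in> M s (restrict x (par s))"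
  shows "P \<in> irr_ext G par X M"
proof -
  have "(\<lambda>y. P {z\<in>PiE G X. z s = y} {z\<in>PiE G X. restrict z (nondesc G par s) = x'})
      \<in> M s (restrict x' (par s))" if sG: "s \<in> G" and x': "x' \<in> PiE (nondesc G par s) X" for s x'
  proof -
    define U where "U = nondesc G par s"
    have UG: "U \<subseteq> G" unfolding U_def nondesc_def by auto
    have x'U: "x' \<in> PiE U X" using x' unfolding U_def .
    have "\<exists>x\<in>PiE G X. restrict x U = x'"
      by (rule restrict_surj_PiE[OF credal_network_PiE_nonempty[OF cn] UG x'U])
    then obtain x where x: "x \<in> PiE G X" and rx: "restrict x U = x'" by blast
    have "restrict z U = x' \<longleftrightarrow> (\<forall>i\<in>U. z i = x i)" for z
      using restrict_eq_iff[OF x'U, of z] rx by auto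
    then have "{z\<in>PiE G X. restrict z U = x'} = fiber X G U x" unfolding fiber_def by auto
    moreover have "par s \<subseteq> U"
      unfolding U_def by (rule parents_subset_nondesc[OF credal_network_acyclic[OF cn] sG credal_network_parents[OF cn sG]])
    then have "restrict x (par s) = restrict x' (par s)"
      unfolding rx[symmetric] by (simp add: Int_absorb1)
    ultimately show ?thesis using local[OF sG x] unfolding U_def by simp
  qed
  then show ?thesis unfolding irr_ext_def using fcP by simp
qed

lemma local_model_limit_block:
  fixes w g :: "nat \<Rightarrow> ('n \<Rightarrow> 'v) \<Rightarrow> real" and q :: "nat \<Rightarrow> 'n \<Rightarrow> ('n \<Rightarrow> 'v) \<Rightarrow> real"
  assumes cn: "credal_network G par X M"
    and anc: "ancestral G par B" "ancestral G par B'" "B \<inter> B' = {}" and D: "D = G - B - B'"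
    and Q: "Q \<in> irr_ext B par X M" and e: "\<And>n. 0 < e n" "e \<longlonglongrightarrow> 0"
    and w: "\<And>n z. w n z = layered_weights (PiE B X) Q (e n) (restrict z B) * g n (restrict z B') * (\<Prod>d\<in>D. q n d z)"
    and g_pos: "\<And>n v. v \<in> PiE B' X \<Longrightarrow> 0 < g n v"
    and q_local: "\<And>n d. d \<in> D \<Longrightarrow> depends_on (q n d) (insert d (par d))"
    and q_norm: "\<And>n d z. d \<in> D \<Longrightarrow> z \<in> PiE G X \<Longrightarrow> (\<Sum>y\<in>X d. q n d (z(d := y))) = 1"
    and q_pos: "\<And>n d z. d \<in> D \<Longrightarrow> z \<in> PiE G X \<Longrightarrow> 0 < q n d z"
    and fcP: "full_cond_prob (PiE G X) P"
    and P_lim: "\<And>A C L. A \<subseteq> PiE G X \<Longrightarrow> C \<subseteq> PiE G X \<Longrightarrow> C \<noteq> {} \<Longrightarrow>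
      (\<lambda>n. weighted_cond (w n) A C) \<longlonglongrightarrow> L \<Longrightarrow> P A C = L"
    and s: "s \<in> B" and x: "x \<in> PiE G X"
  shows "(\<lambda>y. P {z\<in>PiE G X. z s = y} (fiber X G (nondesc G par s) x)) \<in> M s (restrict x (par s))"
proof -
  have BG: "B \<subseteq> G" using anc(1) unfolding ancestral_def by auto
  have fcQ: "full_cond_prob (PiE B X) Q" using Q unfolding irr_ext_def by simp
  define U where "U = nondesc G par s"
  define V where "V = nondesc B par s"
  have VU: "V = U \<inter> B" unfolding V_def U_def by (rule nondesc_ancestral[OF anc(1) s])
  have xV: "restrict x V \<in> PiE V X" using x VU BG by (auto simp: PiE_iff)
  have fiberB: "fiber X B (U \<inter> B) x = {u\<in>PiE B X. restrict u V = restrict x V}"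
    using restrict_eq_iff[OF xV] unfolding fiber_def VU by auto
  define t where "t y = Q {u\<in>PiE B X. u s = y} {u\<in>PiE B X. restrict u V = restrict x V}" for y
  have "par s \<subseteq> V"
    using parents_subset_nondesc[OF credal_network_acyclic[OF cn] _ credal_network_parents[OF cn]] anc(1) s BG
    unfolding VU U_def ancestral_def by auto
  then have "restrict (restrict x V) (par s) = restrict x (par s)" by (simp add: Int_absorb1)
  moreover have "t \<in> M s (restrict (restrict x V) (par s))"
    using Q s xV unfolding irr_ext_def t_def V_def by blast
  ultimately have tM: "t \<in> M s (restrict x (par s))" by simp
  have fiber_ne: "fiber X G U x \<noteq> {}" using x unfolding fiber_def by auto
  have "P {z\<in>PiE G X. z s = y} (fiber X G U x) = t y" for y
  proof (cases "y \<in> X s")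
    case True
    have "(\<lambda>n. weighted_cond (w n) {z\<in>PiE G X. z s = y} (fiber X G U x)) \<longlonglongrightarrow> t y"
      using weighted_cond_block_node_tendsto[OF cn anc D fcQ e w g_pos q_local q_norm q_pos s x True]
      unfolding t_def U_def[symmetric] fiberB .
    moreover have "{z\<in>PiE G X. z s = y} \<subseteq> PiE G X" by auto
    ultimately show ?thesis using P_lim[OF _ fiber_subset_PiE fiber_ne] by blast
  next
    case False
    then have A0: "{z\<in>PiE G X. z s = y} = {}" and A0': "{u\<in>PiE B X. u s = y} = {}"
      using s BG by (auto simp: PiE_iff)
    have "fiber X B (U \<inter> B) x \<noteq> {}"
      using x BG unfolding fiber_def by (auto intro!: exI[of _ "restrict x B"] simp: PiE_iff)
    then have "t y = 0"
      unfolding t_def fiberB[symmetric] A0' by (rule full_cond_prob_empty[OF fcQ fiber_subset_PiE])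
    moreover have "P {z\<in>PiE G X. z s = y} (fiber X G U x) = 0"
      unfolding A0 by (rule full_cond_prob_empty[OF fcP fiber_subset_PiE fiber_ne])
    ultimately show ?thesis by simp
  qed
  then show ?thesis using tM unfolding U_def by simp
qed

lemma local_model_limit_kernel_node:
  fixes w g1 g2 :: "nat \<Rightarrow> ('n \<Rightarrow> 'v) \<Rightarrow> real"
  assumes cn: "credal_network G par X M"
    and anc: "ancestral G par B1" "ancestral G par B2" and D: "D = G - B1 - B2"
    and e: "\<And>n. 0 < e n" "\<And>n. e n < 1" "e \<longlonglongrightarrow> 0"
    and w: "\<And>n z. w n z = g1 n (restrict z B1) * g2 n (restrict z B2) * (\<Prod>d\<in>D. perturbed_kernel X par M (e n) d z)"
    and g_pos: "\<And>n v. v \<in> PiE B1 X \<Longrightarrow> 0 < g1 n v" "\<And>n v. v \<in> PiE B2 X \<Longrightarrow> 0 < g2 n v"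
    and fcP: "full_cond_prob (PiE G X) P"
    and P_lim: "\<And>A C L. A \<subseteq> PiE G X \<Longrightarrow> C \<subseteq> PiE G X \<Longrightarrow> C \<noteq> {} \<Longrightarrow>
      (\<lambda>n. weighted_cond (w n) A C) \<longlonglongrightarrow> L \<Longrightarrow> P A C = L"
    and s: "s \<in> D" and x: "x \<in> PiE G X"
  shows "(\<lambda>y. P {z\<in>PiE G X. z s = y} (fiber X G (nondesc G par s) x)) \<in> M s (restrict x (par s))"
proof -
  have sG: "s \<in> G" using s D by auto
  define t where "t = selected_pmf M s (restrict x (par s))"
  have "restrict x (par s) \<in> PiE (par s) X" using x credal_network_parents[OF cn sG] by (auto simp: PiE_iff)
  note t = selected_pmf[OF cn sG this, folded t_def]
  have fiber_ne: "fiber X G (nondesc G par s) x \<noteq> {}" using x unfolding fiber_def by auto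
  have "P {z\<in>PiE G X. z s = y} (fiber X G (nondesc G par s) x) = t y" for y
  proof (cases "y \<in> X s")
    case True
    have "weighted_cond (w n) {z\<in>PiE G X. z s = y} (fiber X G (nondesc G par s) x)
        = perturbed_kernel X par M (e n) s (x(s := y))" for n
    proof (rule weighted_cond_kernel_node[where w="w n" and ?g1.0="g1 n" and ?g2.0="g2 n"
          and q="perturbed_kernel X par M (e n)", OF cn anc D w g_pos _ _ _ s x True])
      show "depends_on (perturbed_kernel X par M (e n) d) (insert d (par d))" for d
        by (rule depends_on_perturbed_kernel)
      show "(\<Sum>y\<in>X d. perturbed_kernel X par M (e n) d (z(d := y))) = 1" if "d \<in> D" "z \<in> PiE G X" for d z
        using sum_perturbed_kernel[OF cn] that D by auto
      show "0 < perturbed_kernel X par M (e n) d z" if "d \<in> D" "z \<in> PiE G X" for d z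
        using perturbed_kernel_pos[OF cn e(1,2)] that D by auto
    qed
    then have "weighted_cond (w n) {z\<in>PiE G X. z s = y} (fiber X G (nondesc G par s) x)
        = (1 - e n) * t y + e n / real (card (X s))" for n
      using perturbed_kernel_upd[OF cn sG True] unfolding t_def by simp
    moreover have "(\<lambda>n. (1 - e n) * t y + e n / real (card (X s))) \<longlonglongrightarrow> (1 - 0) * t y + 0 / real (card (X s))"
      using credal_network_finite_states[OF cn sG] credal_network_states_nonempty[OF cn sG]
      by (intro tendsto_intros e(3)) auto
    ultimately have "(\<lambda>n. weighted_cond (w n) {z\<in>PiE G X. z s = y} (fiber X G (nondesc G par s) x)) \<longlonglongrightarrow> t y"
      by simp
    moreover have "{z\<in>PiE G X. z s = y} \<subseteq> PiE G X" by auto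
    ultimately show ?thesis using P_lim[OF _ fiber_subset_PiE fiber_ne] by blast
  next
    case False
    then have A0: "{z\<in>PiE G X. z s = y} = {}" and "t y = 0"
      using t(2) sG unfolding is_pmf_on_def by (auto simp: PiE_iff)
    then show ?thesis unfolding A0 using full_cond_prob_empty[OF fcP fiber_subset_PiE fiber_ne] by simp
  qed
  then show ?thesis using t(1) by (simp add: restrict_def)
qed

lemma irr_ext_extend_pair:
  fixes h f :: "('n \<Rightarrow> 'v) \<Rightarrow> real"
  assumes cn: "credal_network G par X M" and anc: "ancestral G par B1" "ancestral G par B2"
    and disj: "B1 \<inter> B2 = {}"
    and Q1: "Q1 \<in> irr_ext B1 par X M" and Q2: "Q2 \<in> irr_ext B2 par X M"
  shows "\<exists>P\<in>irr_ext G par X M.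
    (\<Sum>z\<in>PiE G X. (h (restrict z B1) + f (restrict z B2)) * P {z} (PiE G X))
     = (\<Sum>u\<in>PiE B1 X. h u * Q1 {u} (PiE B1 X)) + (\<Sum>u\<in>PiE B2 X. f u * Q2 {u} (PiE B2 X))"
proof -
  have B1G: "B1 \<subseteq> G" and B2G: "B2 \<subseteq> G" using anc unfolding ancestral_def by auto
  have fc1: "full_cond_prob (PiE B1 X) Q1" and fc2: "full_cond_prob (PiE B2 X) Q2"
    using Q1 Q2 unfolding irr_ext_def by simp_all
  define \<Omega> where "\<Omega> = PiE G X"
  have fin: "finite (PiE S X)" if "S \<subseteq> G" for S
    using credal_network_finite[OF cn] credal_network_finite_states[OF cn] that
    by (intro finite_PiE) (auto intro: finite_subset)
  have ne: "PiE S X \<noteq> {}" if "S \<subseteq> G" for S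
    using credal_network_states_nonempty[OF cn] that by (auto simp: PiE_eq_empty_iff)
  have disj': "B2 \<inter> B1 = {}" using disj by auto
  define D where "D = G - B1 - B2"
  define e where "e n = 1 / (real n + 2)" for n
  have e: "\<And>n. 0 < e n" "\<And>n. e n < 1" "e \<longlonglongrightarrow> 0"
    unfolding e_def using LIMSEQ_ignore_initial_segment[OF lim_inverse_n', of 2]
    by (auto simp: add.commute)
  define q where "q n = perturbed_kernel X par M (e n)" for n
  have q_pos: "0 < q n d z" if "d \<in> D" "z \<in> PiE G X" for n d z
    unfolding q_def using perturbed_kernel_pos[OF cn e(1,2)] that D_def by auto
  have q_norm: "(\<Sum>y\<in>X d. q n d (z(d := y))) = 1" if "d \<in> D" "z \<in> PiE G X" for n d z
    unfolding q_def using sum_perturbed_kernel[OF cn] that D_def by auto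
  have q_local: "depends_on (q n d) (insert d (par d))" if "d \<in> D" for n d
    unfolding q_def by (rule depends_on_perturbed_kernel)
  define r1 where "r1 n = layered_weights (PiE B1 X) Q1 (e n)" for n
  define r2 where "r2 n = layered_weights (PiE B2 X) Q2 (e n)" for n
  have r1_pos: "0 < r1 n v" if "v \<in> PiE B1 X" for n v
    unfolding r1_def by (rule layered_weights_pos[OF fc1 fin[OF B1G] e(1) that])
  have r2_pos: "0 < r2 n v" if "v \<in> PiE B2 X" for n v
    unfolding r2_def by (rule layered_weights_pos[OF fc2 fin[OF B2G] e(1) that])
  define w where "w n z = r1 n (restrict z B1) * r2 n (restrict z B2) * (\<Prod>d\<in>D. q n d z)" for n z
  have w_swap: "w n z = r2 n (restrict z B2) * r1 n (restrict z B1) * (\<Prod>d\<in>D. q n d z)" for n z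
    unfolding w_def by simp
  have "0 < w n z" if z: "z \<in> \<Omega>" for n z
  proof -
    have "0 < r1 n (restrict z B1)" "0 < r2 n (restrict z B2)"
      using r1_pos r2_pos restrict_PiE_subset[OF z[unfolded \<Omega>_def]] B1G B2G by blast+
    moreover have "0 < (\<Prod>d\<in>D. q n d z)" using q_pos z unfolding \<Omega>_def by (intro prod_pos) auto
    ultimately show ?thesis unfolding w_def by simp
  qed
  moreover have fin\<Omega>: "finite \<Omega>" unfolding \<Omega>_def using fin by simp
  ultimately have fcn: "full_cond_prob \<Omega> (weighted_cond (w n))" for n
    by (intro full_cond_prob_weighted_cond)
  obtain \<sigma> P where \<sigma>: "strict_mono \<sigma>" and fcP: "full_cond_prob \<Omega> P"
    and P_sub: "\<And>A C. A \<subseteq> \<Omega> \<Longrightarrow> C \<subseteq> \<Omega> \<Longrightarrow> C \<noteq> {} \<Longrightarrow> (\<lambda>k. weighted_cond (w (\<sigma> k)) A C) \<longlonglongrightarrow> P A C"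
    using full_cond_prob_convergent_subseq[of \<Omega> "\<lambda>n. weighted_cond (w n)", OF fin\<Omega> fcn] by metis
  have P_lim: "P A C = L"
    if "A \<subseteq> \<Omega>" "C \<subseteq> \<Omega>" "C \<noteq> {}" "(\<lambda>n. weighted_cond (w n) A C) \<longlonglongrightarrow> L" for A C L
  proof -
    have "(\<lambda>k. weighted_cond (w (\<sigma> k)) A C) \<longlonglongrightarrow> L"
      using LIMSEQ_subseq_LIMSEQ[OF that(4) \<sigma>] by (simp add: o_def)
    then show ?thesis using P_sub[OF that(1-3)] LIMSEQ_unique by blast
  qed
  have P: "P \<in> irr_ext G par X M"
  proof (rule irr_ext_if_local_on_fibers[OF cn fcP[unfolded \<Omega>_def]])
    fix s x assume s: "s \<in> G" and x: "x \<in> PiE G X"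
    consider "s \<in> B1" | "s \<in> B2" | "s \<in> D" using s unfolding D_def by blast
    then show "(\<lambda>y. P {z\<in>PiE G X. z s = y} (fiber X G (nondesc G par s) x)) \<in> M s (restrict x (par s))"
    proof cases
      case 1
      show ?thesis
        by (rule local_model_limit_block[where w=w and g=r2 and q=q and e=e,
              OF cn anc disj D_def Q1 e(1,3) w_def[unfolded r1_def] r2_pos
              q_local q_norm q_pos fcP[unfolded \<Omega>_def] P_lim[unfolded \<Omega>_def] 1 x])
    next
      case 2
      have D': "D = G - B2 - B1" unfolding D_def by auto
      show ?thesis
        by (rule local_model_limit_block[where w=w and g=r1 and q=q and e=e,
              OF cn anc(2,1) disj' D' Q2 e(1,3)
              w_swap[unfolded r2_def] r1_pos q_local q_norm q_pos fcP[unfolded \<Omega>_def]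
              P_lim[unfolded \<Omega>_def] 2 x])
    next
      case 3
      show ?thesis
        by (rule local_model_limit_kernel_node[where w=w and ?g1.0=r1 and ?g2.0=r2 and e=e,
              OF cn anc D_def e w_def[unfolded q_def] r1_pos r2_pos
              fcP[unfolded \<Omega>_def] P_lim[unfolded \<Omega>_def] 3 x])
    qed
  qed
  moreover have "(\<lambda>n. \<Sum>z\<in>\<Omega>. (h (restrict z B1) + f (restrict z B2)) * weighted_cond (w n) {z} \<Omega>)
      \<longlonglongrightarrow> (\<Sum>u\<in>PiE B1 X. h u * Q1 {u} (PiE B1 X)) + (\<Sum>u\<in>PiE B2 X. f u * Q2 {u} (PiE B2 X))"
  proof -
    have "(\<Sum>z\<in>\<Omega>. (h (restrict z B1) + f (restrict z B2)) * weighted_cond (w n) {z} \<Omega>)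
      = (\<Sum>u\<in>PiE B1 X. h u * weighted_cond (r1 n) {u} (PiE B1 X))
        + (\<Sum>u\<in>PiE B2 X. f u * weighted_cond (r2 n) {u} (PiE B2 X))" for n
    proof -
      have D': "D = G - B2 - B1" unfolding D_def by auto
      show ?thesis for n
        unfolding \<Omega>_def distrib_right sum.distrib
        using sum_weighted_cond_block[OF cn B1G B2G disj D_def w_def r1_pos r2_pos q_local q_norm, where F=h]
          sum_weighted_cond_block[OF cn B2G B1G disj' D' w_swap r2_pos r1_pos
            q_local q_norm, where F=f] by simp
    qed
    then show ?thesis
      unfolding r1_def r2_def
      by (simp only:) (intro tendsto_add expectation_layered_weights_tendsto fc1 fc2 fin ne B1G B2G e(1,3))
  qed
  then have "(\<lambda>k. \<Sum>z\<in>\<Omega>. (h (restrict z B1) + f (restrict z B2)) * weighted_cond (w (\<sigma> k)) {z} \<Omega>)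
      \<longlonglongrightarrow> (\<Sum>u\<in>PiE B1 X. h u * Q1 {u} (PiE B1 X)) + (\<Sum>u\<in>PiE B2 X. f u * Q2 {u} (PiE B2 X))"
    using LIMSEQ_subseq_LIMSEQ[OF _ \<sigma>] by (auto simp: o_def)
  moreover have "(\<lambda>k. \<Sum>z\<in>\<Omega>. (h (restrict z B1) + f (restrict z B2)) * weighted_cond (w (\<sigma> k)) {z} \<Omega>)
      \<longlonglongrightarrow> (\<Sum>z\<in>\<Omega>. (h (restrict z B1) + f (restrict z B2)) * P {z} \<Omega>)"
    using P_sub ne[of G] unfolding \<Omega>_def by (intro tendsto_sum tendsto_mult_left) auto
  ultimately show ?thesis
    using P LIMSEQ_unique unfolding \<Omega>_def by blast
qed
lemma bdd_below_irr_ext_expectations: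
  assumes fin: "finite (PiE S X)"
  shows "bdd_below ((\<lambda>P. \<Sum>z\<in>PiE S X. g z * P {z} (PiE S X)) ` irr_ext S par X M)"
proof (rule bdd_belowI2)
  fix P assume "P \<in> irr_ext S par X M"
  then have fc: "full_cond_prob (PiE S X) P" unfolding irr_ext_def by simp
  have "- \<bar>g z\<bar> \<le> g z * P {z} (PiE S X)" if z: "z \<in> PiE S X" for z
  proof -
    have ne: "PiE S X \<noteq> {}" using z by auto
    have "0 \<le> P {z} (PiE S X)" "P {z} (PiE S X) \<le> 1"
      using full_cond_prob_nonneg[OF fc order_refl ne] full_cond_prob_le_1[OF fc order_refl ne] z by auto
    then have "\<bar>g z * P {z} (PiE S X)\<bar> \<le> \<bar>g z\<bar>" by (simp add: abs_mult mult_left_le)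
    then show ?thesis by linarith
  qed
  then show "- (\<Sum>z\<in>PiE S X. \<bar>g z\<bar>) \<le> (\<Sum>z\<in>PiE S X. g z * P {z} (PiE S X))"
    by (simp add: sum_negf[symmetric] sum_mono)
qed

lemma credal_network_finite_PiE:
  assumes cn: "credal_network G par X M" and S: "S \<subseteq> G"
  shows "finite (PiE S X)"
  using credal_network_finite[OF cn] credal_network_finite_states[OF cn] S
  by (intro finite_PiE) (auto intro: finite_subset)

lemma irr_ext_nonempty:
  assumes cn: "credal_network G par X M" and anc: "ancestral G par S"
  shows "irr_ext S par X M \<noteq> {}"
proof -
  have "full_cond_prob (PiE {} X) (weighted_cond (\<lambda>_. 1))"
    by (rule full_cond_prob_weighted_cond) auto
  then have Q: "weighted_cond (\<lambda>_. 1) \<in> irr_ext {} par X M" unfolding irr_ext_def by simp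
  have "ancestral G par {}" unfolding ancestral_def by simp
  then obtain P where "P \<in> irr_ext G par X M"
    using irr_ext_extend_pair[OF cn _ _ _ Q Q, of "\<lambda>_. 0" "\<lambda>_. 0"] by auto
  then show ?thesis using marginal_irr_ext[OF cn _ anc] by blast
qed

lemma expectation_split_marginals:
  fixes h f :: "('n \<Rightarrow> 'v) \<Rightarrow> real"
  assumes cn: "credal_network G par X M" and P: "P \<in> irr_ext G par X M"
    and anc: "ancestral G par B1" "ancestral G par B2"
  shows "\<exists>Q1\<in>irr_ext B1 par X M. \<exists>Q2\<in>irr_ext B2 par X M.
    (\<Sum>z\<in>PiE G X. (h (restrict z B1) + f (restrict z B2)) * P {z} (PiE G X))
    = (\<Sum>u\<in>PiE B1 X. h u * Q1 {u} (PiE B1 X)) + (\<Sum>u\<in>PiE B2 X. f u * Q2 {u} (PiE B2 X))"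
proof -
  have fc: "full_cond_prob (PiE G X) P" using P unfolding irr_ext_def by simp
  have B: "B1 \<subseteq> G" "B2 \<subseteq> G" using anc unfolding ancestral_def by auto
  note marg = sum_marginal[OF fc credal_network_PiE_nonempty[OF cn] _
      credal_network_finite[OF cn] credal_network_finite_states[OF cn]]
  have "(\<Sum>z\<in>PiE G X. (h (restrict z B1) + f (restrict z B2)) * P {z} (PiE G X))
    = (\<Sum>u\<in>PiE B1 X. h u * marginal X G P B1 {u} (PiE B1 X))
      + (\<Sum>u\<in>PiE B2 X. f u * marginal X G P B2 {u} (PiE B2 X))"
    unfolding distrib_right sum.distrib using marg[OF B(1), of h] marg[OF B(2), of f] by simp
  then show ?thesis using marginal_irr_ext[OF cn P anc(1)] marginal_irr_ext[OF cn P anc(2)] by blast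
qed

lemma cInf_image_eq_add:
  fixes F :: "'a \<Rightarrow> real" and f :: "'b \<Rightarrow> real" and g :: "'c \<Rightarrow> real"
  assumes ne: "A \<noteq> {}" "B \<noteq> {}" "C \<noteq> {}" and bdd: "bdd_below (f ` A)" "bdd_below (g ` B)"
    and split: "\<And>c. c \<in> C \<Longrightarrow> \<exists>a\<in>A. \<exists>b\<in>B. F c = f a + g b"
    and join: "\<And>a b. a \<in> A \<Longrightarrow> b \<in> B \<Longrightarrow> \<exists>c\<in>C. F c = f a + g b"
  shows "Inf (F ` C) = Inf (f ` A) + Inf (g ` B)"
proof (rule antisym)
  have lower: "Inf (f ` A) + Inf (g ` B) \<le> F c" if "c \<in> C" for c
    using split[OF that] bdd by (auto intro!: add_mono cInf_lower)
  then show "Inf (f ` A) + Inf (g ` B) \<le> Inf (F ` C)"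
    using ne(3) by (intro cInf_greatest) auto
  have bdd_F: "bdd_below (F ` C)" using lower by (rule bdd_belowI2)
  have "Inf (F ` C) \<le> f a + g b" if ab: "a \<in> A" "b \<in> B" for a b
  proof -
    obtain c where "c \<in> C" "F c = f a + g b" using join[OF ab] by blast
    then show ?thesis using cInf_lower[OF _ bdd_F] by force
  qed
  then have "Inf (F ` C) - g b \<le> Inf (f ` A)" if "b \<in> B" for b
    using ne(1) that by (intro cInf_greatest) (auto simp: algebra_simps)
  then have "Inf (F ` C) - Inf (f ` A) \<le> Inf (g ` B)"
    using ne(2) by (intro cInf_greatest) (auto simp: algebra_simps)
  then show "Inf (F ` C) \<le> Inf (f ` A) + Inf (g ` B)" by simp
qed

theorem corollary2:
  fixes G :: "'n set" and par :: "'n \<Rightarrow> 'n set" and X :: "'n \<Rightarrow> 'v set"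
    and M :: "'n \<Rightarrow> ('n \<Rightarrow> 'v) \<Rightarrow> ('v \<Rightarrow> real) set"
    and K :: "'n set" and f h :: "('n \<Rightarrow> 'v) \<Rightarrow> real"
  assumes "credal_network G par X M"
    and "K \<subseteq> G" and "closed_set G par K" and "parents_set par K = {}"
  shows "lower_E_irr G par X M
           (\<lambda>z. h (restrict z (nondesc'_set G par K)) + f (restrict z K))
         = lower_E_irr (nondesc'_set G par K) par X M h + lower_E_irr K par X M f"
proof -
  note cn = assms(1)
  define N where "N = nondesc'_set G par K"
  have ancN: "ancestral G par N"
    unfolding N_def using ancestral_nondesc'_set[OF credal_network_parents[OF cn] assms(4)] .
  have ancK: "ancestral G par K" using ancestral_if_parents_set_empty[OF assms(2,4)] .
  have disj: "N \<inter> K = {}" unfolding N_def nondesc'_set_def nondesc_set_def by auto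
  have "N \<subseteq> G" using ancN unfolding ancestral_def by simp
  have ancG: "ancestral G par G" using credal_network_parents[OF cn] unfolding ancestral_def by blast
  show ?thesis
    unfolding lower_E_irr_def N_def[symmetric]
  proof (rule cInf_image_eq_add)
    show "irr_ext N par X M \<noteq> {}" "irr_ext K par X M \<noteq> {}" "irr_ext G par X M \<noteq> {}"
      using irr_ext_nonempty[OF cn ancN] irr_ext_nonempty[OF cn ancK] irr_ext_nonempty[OF cn ancG] .
    show "bdd_below ((\<lambda>Q. \<Sum>u\<in>PiE N X. h u * Q {u} (PiE N X)) ` irr_ext N par X M)"
      "bdd_below ((\<lambda>Q. \<Sum>u\<in>PiE K X. f u * Q {u} (PiE K X)) ` irr_ext K par X M)"
      using credal_network_finite_PiE[OF cn \<open>N \<subseteq> G\<close>] credal_network_finite_PiE[OF cn assms(2)]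
      by (auto intro: bdd_below_irr_ext_expectations)
  qed (erule expectation_split_marginals[OF cn _ ancN ancK],
    rule irr_ext_extend_pair[OF cn ancN ancK disj], assumption+)
qed

end
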